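(* Let $w\in W_0^J$ and $\beta\in\Delta_0^+\setminus\Delta_J^+$ be such that there is an edge $\lfloor wr_\beta\rfloor\xleftarrow{\beta}w$ in the parabolic quantum Bruhat graph. Let $z\in W_J$ be such that $r_\theta w=\lfloor r_\theta w\rfloor z$ (note $z\beta\in\Delta_0^+\setminus\Delta_J^+$). (1) If $\langle w\Lambda,\alpha_0^\vee\rangle>0$ and $w\beta\ne\pm\theta$, then $\langle wr_\beta\Lambda,\alpha_0^\vee\rangle>0$ and there is an edge $\lfloor r_\theta wr_\beta\rfloor\xleftarrow{z\beta}\lfloor r_\theta w\rfloor$. (2) If $\langle wr_\beta\Lambda,\alpha_0^\vee\rangle<0$ and $w\beta\ne\pm\theta$, then $\langle w\Lambda,\alpha_0^\vee\rangle<0$ and there is an edge $\lfloor r_\theta wr_\beta\rfloor\xleftarrow{z\beta}\lfloor r_\theta w\rfloor$. (3) If $\langle wr_\beta\Lambda,\alpha_0^\vee\rangle<0$ and $\langle w\Lambda,\alpha_0^\vee\rangle\ge0$, then $w\beta=\pm\theta$. (4) If $\langle wr_\beta\Lambda,\alpha_0^\vee\rangle\le0$ and $\langle w\Lambda,\alpha_0^\vee\rangle>0$, then $w\beta=\pm\theta$.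
   Context: Let $\mathfrak{g}$ be an untwisted affine Lie algebra with index set $I$, distinguished node $0$, $I_0=I\setminus\{0\}$, simple roots $\alpha_j$ and coroots $\alpha_j^\vee$, null root $\delta$, canonical central element $c$. Let $\Delta_0$ be the finite root system (indexed by $I_0$) with positive roots $\Delta_0^+$, negative roots $\Delta_0^-$, highest root $\theta$, Weyl group $W_0$ generated by $r_j$ ($j\in I_0$); $r_\theta$ is the reflection in $\theta$; $\alpha_0^\vee=-\theta^\vee+c$. Let $\lambda=\sum_{i\in I_0}m_i\varpi_i$ ($m_i\in\mathbb{Z}_{\ge0}$, $\varpi_i=\Lambda_i-a_i^\vee\Lambda_0$ the level-zero fundamental weights) and $\Lambda=\mathrm{cl}(\lambda)$ its image modulo $\mathbb{C}\delta$; since $\Lambda$ has level zero, $\langle\mu,\alpha_0^\vee\rangle=-\langle\mu,\theta^\vee\rangle$ for $\mu\in W_0\Lambda$. Let $J=\{j\in I_0\mid\langle\Lambda,\alpha_j^\vee\rangle=0\}$, $W_J=\langle r_j\mid j\in J\rangle$, $\Delta_J^+=\Delta_0^+\cap\bigoplus_{j\in J}\mathbb{Z}\alpha_j$, $W_0^J$ the minimal-length representatives of $W_0/W_J$, $\lfloor w\rfloor\in W_0^J$ the representative of $wW_J$, $\ell$ the length, $\rho=\frac12\sum_{\alpha\in\Delta_0^+}\alpha$, $\rho_J=\frac12\sum_{\alpha\in\Delta_J^+}\alpha$. The parabolic quantum Bruhat graph has vertex set $W_0^J$ and a directed edge $\lfloor wr_\beta\rfloor\xleftarrow{\beta}w$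 for $w\in W_0^J$, $\beta\in\Delta_0^+\setminus\Delta_J^+$, whenever either $\ell(\lfloor wr_\beta\rfloor)=\ell(w)+1$ or $\ell(\lfloor wr_\beta\rfloor)=\ell(w)-2\langle\rho-\rho_J,\beta^\vee\rangle+1$. *)

theory Defs
  imports "HOL-Analysis.Analysis"
begin

definition coroot_pair :: "'a::euclidean_space \<Rightarrow> 'a \<Rightarrow> real" where
  "coroot_pair \<mu> \<beta> = 2 * (\<mu> \<bullet> \<beta>) / (\<beta> \<bullet> \<beta>)"

definition refl :: "'a::euclidean_space \<Rightarrow> 'a \<Rightarrow> 'a" where
  "refl \<beta> x = x - coroot_pair x \<beta> *\<^sub>R \<beta>"

definition root_system :: "'a::euclidean_space set \<Rightarrow> bool" where
  "root_system R \<longleftrightarrow> finite R \<and> 0 \<notin> R \<and> span R = UNIV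
     \<and> (\<forall>a\<in>R. \<forall>b\<in>R. refl a b \<in> R)
     \<and> (\<forall>a\<in>R. \<forall>b\<in>R. coroot_pair b a \<in> \<int>)
     \<and> (\<forall>a\<in>R. \<forall>c. c *\<^sub>R a \<in> R \<longrightarrow> c = 1 \<or> c = -1)"

definition irreducible_rs :: "'a::euclidean_space set \<Rightarrow> bool" where
  "irreducible_rs R \<longleftrightarrow> \<not> (\<exists>A B. A \<union> B = R \<and> A \<inter> B = {} \<and> A \<noteq> {} \<and> B \<noteq> {}
       \<and> (\<forall>a\<in>A. \<forall>b\<in>B. a \<bullet> b = 0))"

definition rcomb :: "'i set \<Rightarrow> ('i \<Rightarrow> 'a::euclidean_space) \<Rightarrow> ('i \<Rightarrow> int) \<Rightarrow> 'a" where
  "rcomb I \<alpha> c = (\<Sum>i\<in>I. of_int (c i) *\<^sub>R \<alpha> i)"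

definition simple_system :: "'a::euclidean_space set \<Rightarrow> 'i set \<Rightarrow> ('i \<Rightarrow> 'a) \<Rightarrow> bool" where
  "simple_system R I \<alpha> \<longleftrightarrow> finite I \<and> inj_on \<alpha> I \<and> \<alpha> ` I \<subseteq> R \<and> independent (\<alpha> ` I)
     \<and> (\<forall>b\<in>R. \<exists>c. ((\<forall>i\<in>I. 0 \<le> c i) \<or> (\<forall>i\<in>I. c i \<le> 0)) \<and> b = rcomb I \<alpha> c)"

definition pos_roots :: "'a::euclidean_space set \<Rightarrow> 'i set \<Rightarrow> ('i \<Rightarrow> 'a) \<Rightarrow> 'a set" where
  "pos_roots R I \<alpha> = {b\<in>R. \<exists>c. (\<forall>i\<in>I. 0 \<le> c i) \<and> b = rcomb I \<alpha> c}"

definition pos_roots_J :: "'a::euclidean_space set \<Rightarrow> 'i set \<Rightarrow> ('i \<Rightarrow> 'a) \<Rightarrow> 'i set \<Rightarrow> 'a set" where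
  "pos_roots_J R I \<alpha> J = {b\<in>pos_roots R I \<alpha>. \<exists>c. (\<forall>i\<in>I - J. c i = 0) \<and> b = rcomb I \<alpha> c}"

definition highest_root :: "'a::euclidean_space set \<Rightarrow> 'i set \<Rightarrow> ('i \<Rightarrow> 'a) \<Rightarrow> 'a \<Rightarrow> bool" where
  "highest_root R I \<alpha> \<theta> \<longleftrightarrow> \<theta> \<in> R \<and>
     (\<forall>b\<in>R. \<exists>c. (\<forall>i\<in>I. 0 \<le> c i) \<and> \<theta> - b = rcomb I \<alpha> c)"

definition wprod :: "('i \<Rightarrow> 'a::euclidean_space) \<Rightarrow> 'i list \<Rightarrow> 'a \<Rightarrow> 'a" where
  "wprod \<alpha> is = foldr (\<lambda>i f. refl (\<alpha> i) \<circ> f) is id"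

definition weyl_sub :: "('i \<Rightarrow> 'a::euclidean_space) \<Rightarrow> 'i set \<Rightarrow> ('a \<Rightarrow> 'a) set" where
  "weyl_sub \<alpha> K = {wprod \<alpha> is | is. set is \<subseteq> K}"

definition wlen :: "('i \<Rightarrow> 'a::euclidean_space) \<Rightarrow> 'i set \<Rightarrow> ('a \<Rightarrow> 'a) \<Rightarrow> nat" where
  "wlen \<alpha> I w = (LEAST n. \<exists>is. set is \<subseteq> I \<and> length is = n \<and> wprod \<alpha> is = w)"

definition min_reps :: "('i \<Rightarrow> 'a::euclidean_space) \<Rightarrow> 'i set \<Rightarrow> 'i set \<Rightarrow> ('a \<Rightarrow> 'a) set" where
  "min_reps \<alpha> I J = {w \<in> weyl_sub \<alpha> I. \<forall>v\<in>weyl_sub \<alpha> J. wlen \<alpha> I w \<le> wlen \<alpha> I (w \<circ> v)}"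

definition wfloor :: "('i \<Rightarrow> 'a::euclidean_space) \<Rightarrow> 'i set \<Rightarrow> 'i set \<Rightarrow> ('a \<Rightarrow> 'a) \<Rightarrow> ('a \<Rightarrow> 'a)" where
  "wfloor \<alpha> I J w = (THE u. u \<in> min_reps \<alpha> I J \<and> (\<exists>v\<in>weyl_sub \<alpha> J. u = w \<circ> v))"

definition rho :: "'a::euclidean_space set \<Rightarrow> 'i set \<Rightarrow> ('i \<Rightarrow> 'a) \<Rightarrow> 'a" where
  "rho R I \<alpha> = (1/2) *\<^sub>R (\<Sum>b\<in>pos_roots R I \<alpha>. b)"

definition rho_J :: "'a::euclidean_space set \<Rightarrow> 'i set \<Rightarrow> ('i \<Rightarrow> 'a) \<Rightarrow> 'i set \<Rightarrow> 'a" where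
  "rho_J R I \<alpha> J = (1/2) *\<^sub>R (\<Sum>b\<in>pos_roots_J R I \<alpha> J. b)"

definition qbg_edge :: "'a::euclidean_space set \<Rightarrow> 'i set \<Rightarrow> ('i \<Rightarrow> 'a) \<Rightarrow> 'i set
    \<Rightarrow> ('a \<Rightarrow> 'a) \<Rightarrow> 'a \<Rightarrow> ('a \<Rightarrow> 'a) \<Rightarrow> bool" where
  "qbg_edge R I \<alpha> J w b u \<longleftrightarrow>
     w \<in> min_reps \<alpha> I J \<and> b \<in> pos_roots R I \<alpha> - pos_roots_J R I \<alpha> J
     \<and> u = wfloor \<alpha> I J (w \<circ> refl b)
     \<and> (wlen \<alpha> I u = wlen \<alpha> I w + 1
        \<or> real (wlen \<alpha> I u) = real (wlen \<alpha> I w)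
             - 2 * coroot_pair (rho R I \<alpha> - rho_J R I \<alpha> J) b + 1)"

(* <mu, alpha_0^vee> = - <mu, theta^vee> for level-zero mu *)
definition alpha0_pair :: "'a::euclidean_space \<Rightarrow> 'a \<Rightarrow> real" where
  "alpha0_pair \<theta> \<mu> = - coroot_pair \<mu> \<theta>"

end

theory Submission
  imports Defs
begin

text \<open>Let \<open>\<gamma> = w\<inverse> \<theta>\<close>, so that \<open>\<langle>w \<Lambda>, \<alpha>\<^sub>0\<^sup>\<or>\<rangle>\<close> has the sign of \<open>-\<langle>\<Lambda>, \<gamma>\<rangle>\<close> and
  \<open>\<langle>w s\<^sub>\<beta> \<Lambda>, \<alpha>\<^sub>0\<^sup>\<or>\<rangle>\<close> that of \<open>-\<langle>\<Lambda>, s\<^sub>\<beta> \<gamma>\<rangle>\<close>. The length of \<open>\<lfloor>x\<rfloor>\<close> is the number of roots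
  in \<open>\<Delta>\<^sub>0\<^sup>+ \<setminus> \<Delta>\<^sub>J\<^sup>+\<close> sent to negative roots by \<open>x\<close>. Counting these roots according to
  the sign of their pairing with \<open>\<theta>\<close> shows that left multiplication by \<open>r\<^sub>\<theta>\<close> changes this
  number by \<open>\<langle>x (2\<rho> - 2\<rho>\<^sub>J), \<theta>\<^sup>\<or>\<rangle>\<close>, up to a correction \<open>\<plusminus>1\<close> when \<open>x\<close> maps a root of
  \<open>\<Delta>\<^sub>0\<^sup>+ \<setminus> \<Delta>\<^sub>J\<^sup>+\<close> to \<open>\<plusminus>\<theta>\<close>; that happens exactly according to the sign of \<open>\<langle>\<Lambda>, x\<inverse> \<theta>\<rangle>\<close>.
  If the signs for \<open>w\<close> and \<open>w s\<^sub>\<beta>\<close> agree, the corrections cancel and the length change along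
  the translated edge is the old one minus \<open>\<langle>2\<rho> - 2\<rho>\<^sub>J, \<beta>\<^sup>\<or>\<rangle> \<langle>w \<beta>, \<theta>\<^sup>\<or>\<rangle>\<close>; since
  \<open>\<langle>w \<beta>, \<theta>\<^sup>\<or>\<rangle> \<in> {0, \<plusminus>1}\<close> has the sign of \<open>w \<beta>\<close>, which is positive for Bruhat edges and
  negative for quantum edges, the translated step is again an edge (parts 1 and 2).
  The signs cannot change in the forbidden directions (parts 3 and 4, and the sign claims of
  1 and 2): a change forces \<open>\<langle>w \<beta>, \<theta>\<^sup>\<or>\<rangle> < 0\<close>, hence a quantum edge, and for a quantum edge every
  root of \<open>\<Delta>\<^sub>0\<^sup>+ \<setminus> \<Delta>\<^sub>J\<^sup>+\<close> that \<open>s\<^sub>\<beta>\<close> moves out of \<open>\<Delta>\<^sub>0\<^sup>+ \<setminus> \<Delta>\<^sub>J\<^sup>+\<close> is made negative by \<open>w\<close>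
  and pairs to \<open>1\<close> with \<open>\<beta>\<^sup>\<or>\<close>, which is incompatible with \<open>w \<gamma> = \<theta>\<close> unless \<open>w \<beta> = -\<theta>\<close>.\<close>

section \<open>Reflections and their products\<close>

lemma coroot_pair_add: "coroot_pair (x + y) b = coroot_pair x b + coroot_pair y b"
  by (simp add: coroot_pair_def inner_add_left add_divide_distrib)

lemma coroot_pair_diff: "coroot_pair (x - y) b = coroot_pair x b - coroot_pair y b"
  by (simp add: coroot_pair_def inner_diff_left diff_divide_distrib)

lemma coroot_pair_scaleR: "coroot_pair (c *\<^sub>R x) b = c * coroot_pair x b"
  by (simp add: coroot_pair_def)

lemma coroot_pair_minus_left: "coroot_pair (- x) b = - coroot_pair x b"
  by (simp add: coroot_pair_def)

lemma coroot_pair_minus_right: "coroot_pair x (- b) = - coroot_pair x b"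
  by (simp add: coroot_pair_def)

lemma coroot_pair_sum: "coroot_pair (\<Sum>x\<in>A. f x) b = (\<Sum>x\<in>A. coroot_pair (f x) b)"
  by (simp add: coroot_pair_def inner_sum_left sum_divide_distrib sum_distrib_left)

lemma coroot_pair_self: "b \<noteq> 0 \<Longrightarrow> coroot_pair b b = 2"
  by (simp add: coroot_pair_def)

lemma coroot_pair_sign:
  assumes "b \<noteq> 0"
  shows "(coroot_pair x b > 0 \<longleftrightarrow> x \<bullet> b > 0) \<and> (coroot_pair x b < 0 \<longleftrightarrow> x \<bullet> b < 0)
    \<and> (coroot_pair x b = 0 \<longleftrightarrow> x \<bullet> b = 0)"
proof -
  have "b \<bullet> b > 0" using assms by simp
  then show ?thesis
    by (auto simp: coroot_pair_def zero_less_divide_iff divide_less_0_iff; smt (verit)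
        inner_ge_zero)
qed

lemma refl_self: "b \<noteq> 0 \<Longrightarrow> refl b b = - b"
  by (simp add: refl_def coroot_pair_self scaleR_2 algebra_simps)

lemma refl_linear: "linear (refl b)"
  unfolding refl_def by (rule linearI) (auto simp: coroot_pair_add coroot_pair_scaleR algebra_simps)

lemma refl_inner_refl: "b \<noteq> 0 \<Longrightarrow> refl b x \<bullet> refl b y = x \<bullet> y"
  by (simp add: refl_def coroot_pair_def inner_diff_left inner_diff_right algebra_simps
      inner_commute)

lemma refl_refl: "b \<noteq> 0 \<Longrightarrow> refl b (refl b x) = x"
  by (simp add: refl_def coroot_pair_diff coroot_pair_scaleR coroot_pair_self algebra_simps)

lemma refl_minus: "refl (- b) = refl b"
  by (rule ext) (simp add: refl_def coroot_pair_minus_right)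

lemma refl_adjoint: "b \<noteq> 0 \<Longrightarrow> refl b x \<bullet> y = x \<bullet> refl b y"
  by (metis refl_inner_refl refl_refl)

lemma orthogonal_transformation_refl: "b \<noteq> 0 \<Longrightarrow> orthogonal_transformation (refl b)"
  by (simp add: orthogonal_transformation_def refl_linear refl_inner_refl)

lemma orthogonal_transformation_id': "orthogonal_transformation id"
  by (simp add: id_def)

lemma orthogonal_transformation_inner: "orthogonal_transformation f \<Longrightarrow> f x \<bullet> f y = x \<bullet> y"
  by (simp add: orthogonal_transformation_def)

lemma orthogonal_transformation_coroot_pair:
  "orthogonal_transformation f \<Longrightarrow> coroot_pair (f x) (f b) = coroot_pair x b"
  by (simp add: orthogonal_transformation_def coroot_pair_def)

lemma orthogonal_transformation_diff: "orthogonal_transformation f \<Longrightarrow> f (x - y) = f x - f y"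
  by (simp add: orthogonal_transformation_def linear_diff)

lemma orthogonal_transformation_minus: "orthogonal_transformation f \<Longrightarrow> f (- x) = - f x"
  by (simp add: orthogonal_transformation_def linear_neg)

lemma orthogonal_transformation_sum:
  "orthogonal_transformation f \<Longrightarrow> f (\<Sum>x\<in>A. g x) = (\<Sum>x\<in>A. f (g x))"
  by (simp add: orthogonal_transformation_def linear_sum)

lemma orthogonal_transformation_refl_conj:
  "orthogonal_transformation f \<Longrightarrow> f (refl b x) = refl (f b) (f x)"
  by (simp add: refl_def orthogonal_transformation_diff orthogonal_transformation_scaleR
      orthogonal_transformation_coroot_pair)

lemma wprod_Nil: "wprod \<alpha> [] = id" by (simp add: wprod_def)

lemma wprod_Cons: "wprod \<alpha> (i # is) = refl (\<alpha> i) \<circ> wprod \<alpha> is" by (simp add: wprod_def)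

lemma wprod_append: "wprod \<alpha> (xs @ ys) = wprod \<alpha> xs \<circ> wprod \<alpha> ys"
  by (induct xs) (simp_all add: wprod_Nil wprod_Cons comp_assoc)

lemma wprod_fix: "(\<forall>j\<in>set xs. refl (\<alpha> j) L = L) \<Longrightarrow> wprod \<alpha> xs L = L"
  by (induct xs) (simp_all add: wprod_Nil wprod_Cons)

lemma wprod_snoc: "wprod \<alpha> (xs @ [j]) = wprod \<alpha> xs \<circ> refl (\<alpha> j)"
  by (simp add: wprod_append wprod_Cons wprod_Nil)

section \<open>Positive roots\<close>

locale based_root_system =
  fixes R :: "'a::euclidean_space set" and I0 :: "'i set" and \<alpha> :: "'i \<Rightarrow> 'a"
  assumes rs: "root_system R" and simple: "simple_system R I0 \<alpha>"
begin

lemma finite_roots: "finite R" and zero_not_root: "0 \<notin> R" and refl_root: "a\<in>R \<Longrightarrow> b\<in>R \<Longrightarrow> refl a b \<in> R"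
  and coroot_pair_Ints: "a\<in>R \<Longrightarrow> b\<in>R \<Longrightarrow> coroot_pair b a \<in> \<int>"
  and reduced_root: "a\<in>R \<Longrightarrow> c *\<^sub>R a \<in> R \<Longrightarrow> c = 1 \<or> c = -1"
  using rs unfolding root_system_def by auto

lemma root_nonzero: "a \<in> R \<Longrightarrow> a \<noteq> 0" using zero_not_root by auto

lemma minus_root: "a\<in>R \<Longrightarrow> -a \<in> R" by (metis refl_root refl_self root_nonzero)

lemma finite_index: "finite I0" and inj_on_simple: "inj_on \<alpha> I0" and simple_root: "i\<in>I0 \<Longrightarrow> \<alpha> i \<in> R"
  and simple_independent: "independent (\<alpha> ` I0)"
  and root_expansion: "b\<in>R \<Longrightarrow> \<exists>c. ((\<forall>i\<in>I0. 0 \<le> c i) \<or> (\<forall>i\<in>I0. c i \<le> 0)) \<and> b = rcomb I0 \<alpha> c"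
  using simple unfolding simple_system_def by auto

lemma simple_nonzero: "i\<in>I0 \<Longrightarrow> \<alpha> i \<noteq> 0" using simple_root root_nonzero by auto

lemma rcomb_add: "rcomb I0 \<alpha> c + rcomb I0 \<alpha> d = rcomb I0 \<alpha> (\<lambda>i. c i + d i)"
  by (simp add: rcomb_def scaleR_add_left sum.distrib)

lemma rcomb_uminus: "- rcomb I0 \<alpha> c = rcomb I0 \<alpha> (\<lambda>i. - c i)"
  by (simp add: rcomb_def sum_negf)

lemma rcomb_diff: "rcomb I0 \<alpha> c - rcomb I0 \<alpha> d = rcomb I0 \<alpha> (\<lambda>i. c i - d i)"
  by (simp add: rcomb_def scaleR_diff_left sum_subtractf)

lemma rcomb_scale: "of_int t *\<^sub>R rcomb I0 \<alpha> c = rcomb I0 \<alpha> (\<lambda>i. t * c i)"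
  by (simp add: rcomb_def scaleR_sum_right)

lemma rcomb_single: "i\<in>I0 \<Longrightarrow> rcomb I0 \<alpha> (\<lambda>j. if j = i then a else 0) = of_int a *\<^sub>R \<alpha> i"
proof -
  assume i: "i\<in>I0"
  have "(\<Sum>j\<in>I0. real_of_int (if j = i then a else 0) *\<^sub>R \<alpha> j) =
      (\<Sum>j\<in>I0. if j = i then real_of_int a *\<^sub>R \<alpha> j else 0)"
    by (rule sum.cong) auto
  also have "\<dots> = real_of_int a *\<^sub>R \<alpha> i" using finite_index i by (simp add: sum.delta)
  finally show ?thesis unfolding rcomb_def .
qed

lemma rcomb_cong: "(\<And>i. i\<in>I0 \<Longrightarrow> c i = d i) \<Longrightarrow> rcomb I0 \<alpha> c = rcomb I0 \<alpha> d"
  by (simp add: rcomb_def)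

lemma rcomb_eq_0D: assumes h: "rcomb I0 \<alpha> c = 0" "i\<in>I0" shows "c i = 0"
proof -
  let ?u = "\<lambda>v. real_of_int (c (inv_into I0 \<alpha> v))"
  have "(\<Sum>v\<in>\<alpha>`I0. ?u v *\<^sub>R v) = (\<Sum>j\<in>I0. ?u (\<alpha> j) *\<^sub>R \<alpha> j)"
    using sum.reindex[OF inj_on_simple, of "\<lambda>v. ?u v *\<^sub>R v"] by simp
  also have "\<dots> = rcomb I0 \<alpha> c" by (simp add: rcomb_def inv_into_f_f[OF inj_on_simple])
  finally have "(\<Sum>v\<in>\<alpha>`I0. ?u v *\<^sub>R v) = 0" using h by simp
  then have "?u (\<alpha> i) = 0"
    using real_vector.independentD[OF simple_independent finite_imageI[OF finite_index]
        order_refl, of ?u "\<alpha> i"] h(2) by blast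
  then show ?thesis using inv_into_f_f[OF inj_on_simple h(2)] by simp
qed

lemma rcomb_unique: "rcomb I0 \<alpha> c = rcomb I0 \<alpha> d \<Longrightarrow> i\<in>I0 \<Longrightarrow> c i = d i"
  using rcomb_eq_0D[of "\<lambda>i. c i - d i" i] rcomb_diff[of c d] by simp

definition nonneg_comb :: "'a \<Rightarrow> bool" where
  "nonneg_comb v \<longleftrightarrow> (\<exists>c. (\<forall>i\<in>I0. 0 \<le> c i) \<and> v = rcomb I0 \<alpha> c)"

abbreviation pos where "pos \<equiv> pos_roots R I0 \<alpha>"

lemma mem_pos_iff: "b \<in> pos \<longleftrightarrow> b \<in> R \<and> nonneg_comb b"
  by (simp add: pos_roots_def nonneg_comb_def)

lemma nonneg_comb_add: "nonneg_comb a \<Longrightarrow> nonneg_comb b \<Longrightarrow> nonneg_comb (a + b)"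
proof -
  assume "nonneg_comb a" "nonneg_comb b"
  then obtain c d where "\<forall>i\<in>I0. 0 \<le> c i" "a = rcomb I0 \<alpha> c" "\<forall>i\<in>I0. 0 \<le> d i" "b = rcomb I0 \<alpha> d"
    unfolding nonneg_comb_def by blast
  then show ?thesis unfolding nonneg_comb_def
    by (intro exI[of _ "\<lambda>i. c i + d i"]) (simp add: rcomb_add)
qed

lemma nonneg_comb_scale: "nonneg_comb a \<Longrightarrow> 0 \<le> t \<Longrightarrow> nonneg_comb (of_int t *\<^sub>R a)"
proof -
  assume "nonneg_comb a" "0 \<le> t"
  then obtain c where "\<forall>i\<in>I0. 0 \<le> c i" "a = rcomb I0 \<alpha> c"
    unfolding nonneg_comb_def by blast
  then show ?thesis unfolding nonneg_comb_def using \<open>0 \<le> t\<close>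
    by (intro exI[of _ "\<lambda>i. t * c i"]) (simp add: rcomb_scale)
qed

lemma nonneg_comb_antisym: assumes "nonneg_comb a" "nonneg_comb (-a)" shows "a = 0"
proof -
  obtain c d where c: "\<forall>i\<in>I0. 0 \<le> c i" "a = rcomb I0 \<alpha> c"
    and d: "\<forall>i\<in>I0. 0 \<le> d i" "-a = rcomb I0 \<alpha> d"
    using assms unfolding nonneg_comb_def by blast
  have "rcomb I0 \<alpha> c = - (- a)" using c by simp
  also have "\<dots> = - rcomb I0 \<alpha> d" using d by simp
  also have "\<dots> = rcomb I0 \<alpha> (\<lambda>i. - d i)" by (rule rcomb_uminus)
  finally have cd: "rcomb I0 \<alpha> c = rcomb I0 \<alpha> (\<lambda>i. - d i)" .
  then have "\<forall>i\<in>I0. c i = 0"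
  proof (intro ballI)
    fix i assume i: "i\<in>I0"
    have "c i = - d i" using rcomb_unique[OF cd i] .
    then show "c i = 0" using c(1) d(1) i by force
  qed
  then have "a = rcomb I0 \<alpha> (\<lambda>i. 0)" using c(2) by (auto intro: rcomb_cong)
  then show ?thesis by (simp add: rcomb_def)
qed

lemma root_nonneg_comb_cases: "b\<in>R \<Longrightarrow> nonneg_comb b \<or> nonneg_comb (-b)"
proof -
  assume "b\<in>R"
  then obtain c where c: "(\<forall>i\<in>I0. 0 \<le> c i) \<or> (\<forall>i\<in>I0. c i \<le> 0)" "b = rcomb I0 \<alpha> c"
    using root_expansion by blast
  show ?thesis
  proof (cases "\<forall>i\<in>I0. 0 \<le> c i")
    case True
    then have "nonneg_comb b" unfolding nonneg_comb_def using c(2) by (intro exI[of _ c]) simp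
    then show ?thesis ..
  next
    case False
    then have nn: "\<forall>i\<in>I0. 0 \<le> - c i" using c(1) by auto
    have "-b = - rcomb I0 \<alpha> c" using c(2) by simp
    also have "\<dots> = rcomb I0 \<alpha> (\<lambda>i. - c i)" by (rule rcomb_uminus)
    finally have "nonneg_comb (-b)" unfolding nonneg_comb_def using nn
      by (intro exI[of _ "\<lambda>i. - c i"]) simp
    then show ?thesis ..
  qed
qed

lemma pos_or_minus_pos: "b\<in>R \<Longrightarrow> b \<in> pos \<or> -b \<in> pos"
  by (auto simp: mem_pos_iff dest: root_nonneg_comb_cases minus_root)

lemma pos_minus_not_pos: "b \<in> pos \<Longrightarrow> -b \<notin> pos"
  using nonneg_comb_antisym[of b] root_nonzero[of b] unfolding mem_pos_iff by auto

lemma not_pos_iff_minus_pos: "b\<in>R \<Longrightarrow> b \<notin> pos \<longleftrightarrow> -b \<in> pos"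
  using pos_or_minus_pos[of b] pos_minus_not_pos[of b] pos_minus_not_pos[of "-b"] by auto

lemma not_pos_iff_nonneg_comb_minus: "b\<in>R \<Longrightarrow> b \<notin> pos \<longleftrightarrow> nonneg_comb (-b)"
  using not_pos_iff_minus_pos[of b] mem_pos_iff[of "-b"] minus_root[of b] by auto

lemma pos_root: "b \<in> pos \<Longrightarrow> b \<in> R" using mem_pos_iff by simp

lemma finite_pos: "finite pos" by (rule finite_subset[OF _ finite_roots]) (auto simp: mem_pos_iff)

lemma simple_pos: "i\<in>I0 \<Longrightarrow> \<alpha> i \<in> pos"
proof -
  assume i: "i\<in>I0"
  have "nonneg_comb (\<alpha> i)" unfolding nonneg_comb_def
    by (rule exI[of _ "\<lambda>j. if j = i then 1 else 0"]) (simp add: rcomb_single[OF i])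
  then show ?thesis using simple_root i mem_pos_iff by blast
qed

lemma coroot_pair_int: "a\<in>R \<Longrightarrow> b\<in>R \<Longrightarrow> \<exists>t::int. coroot_pair b a = of_int t"
  using coroot_pair_Ints by (meson Ints_cases)

lemma refl_rcomb: assumes i: "i\<in>I0" and t: "coroot_pair (rcomb I0 \<alpha> c) (\<alpha> i) = of_int t"
  shows "refl (\<alpha> i) (rcomb I0 \<alpha> c) = rcomb I0 \<alpha> (\<lambda>j. c j - (if j = i then t else 0))"
proof -
  have "refl (\<alpha> i) (rcomb I0 \<alpha> c) = rcomb I0 \<alpha> c - of_int t *\<^sub>R \<alpha> i" unfolding refl_def t by simp
  also have "of_int t *\<^sub>R \<alpha> i = rcomb I0 \<alpha> (\<lambda>j. if j = i then t else 0)" using rcomb_single[OF i]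
    by simp
  also have "rcomb I0 \<alpha> c - \<dots> = rcomb I0 \<alpha> (\<lambda>j. c j - (if j = i then t else 0))"
    by (rule rcomb_diff)
  finally show ?thesis .
qed

lemma refl_simple_pos: assumes i: "i\<in>I0" and d: "\<delta> \<in> pos" "\<delta> \<noteq> \<alpha> i"
  shows "refl (\<alpha> i) \<delta> \<in> pos"
proof (rule ccontr)
  assume nn: "refl (\<alpha> i) \<delta> \<notin> pos"
  obtain c where c: "\<forall>i\<in>I0. 0 \<le> c i" "\<delta> = rcomb I0 \<alpha> c" using d mem_pos_iff nonneg_comb_def by blast
  obtain t where t: "coroot_pair \<delta> (\<alpha> i) = of_int t" using coroot_pair_int simple_root i pos_root d
    by blast
  have eq: "refl (\<alpha> i) \<delta> = rcomb I0 \<alpha> (\<lambda>j. c j - (if j = i then t else 0))"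
    using refl_rcomb[OF i] t c(2) by simp
  have "refl (\<alpha> i) \<delta> \<in> R" using refl_root simple_root i pos_root d by blast
  then obtain e where e: "\<forall>i\<in>I0. 0 \<le> e i" "- refl (\<alpha> i) \<delta> = rcomb I0 \<alpha> e"
    using nn not_pos_iff_nonneg_comb_minus nonneg_comb_def by blast
  have "refl (\<alpha> i) \<delta> = - (- refl (\<alpha> i) \<delta>)" by simp
  also have "\<dots> = - rcomb I0 \<alpha> e" using e(2) by simp
  also have "\<dots> = rcomb I0 \<alpha> (\<lambda>j. - e j)" by (rule rcomb_uminus)
  finally have "rcomb I0 \<alpha> (\<lambda>j. c j - (if j = i then t else 0)) = rcomb I0 \<alpha> (\<lambda>j. - e j)"
    using eq by simp
  then have "\<forall>j\<in>I0. j \<noteq> i \<longrightarrow> c j = - e j" using rcomb_unique by fastforce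
  then have z: "\<forall>j\<in>I0. j \<noteq> i \<longrightarrow> c j = 0" using c e by force
  have "\<delta> = rcomb I0 \<alpha> (\<lambda>j. if j = i then c i else 0)"
    using c(2) z by (auto intro: rcomb_cong)
  then have dd: "\<delta> = of_int (c i) *\<^sub>R \<alpha> i" using rcomb_single i by simp
  have "of_int (c i) *\<^sub>R \<alpha> i \<in> R" using dd pos_root d(1) by simp
  from reduced_root[OF simple_root[OF i] this]
  have "real_of_int (c i) = 1 \<or> real_of_int (c i) = -1" .
  then have "c i = 1" using c i by auto
  then show False using d dd by simp
qed

section \<open>The Weyl group\<close>

abbreviation W where "W \<equiv> weyl_sub \<alpha> I0"

lemma weyl_sub_iff: "x \<in> weyl_sub \<alpha> K \<longleftrightarrow> (\<exists>xs. set xs \<subseteq> K \<and> x = wprod \<alpha> xs)"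
  by (auto simp: weyl_sub_def)

lemma orthogonal_transformation_wprod: "set xs \<subseteq> I0 \<Longrightarrow> orthogonal_transformation (wprod \<alpha> xs)"
proof (induct "xs")
  case Nil show ?case unfolding wprod_Nil by (rule orthogonal_transformation_id')
next
  case (Cons i xs)
  then have "orthogonal_transformation (wprod \<alpha> xs)" "i \<in> I0" by auto
  then show ?case unfolding wprod_Cons
    by (intro orthogonal_transformation_compose orthogonal_transformation_refl simple_nonzero)
qed

lemma wprod_root: "set xs \<subseteq> I0 \<Longrightarrow> x \<in> R \<Longrightarrow> wprod \<alpha> xs x \<in> R"
proof (induct "xs")
  case Nil then show ?case by (simp add: wprod_Nil)
next
  case (Cons i xs)
  then show ?case by (simp add: wprod_Cons refl_root simple_root)
qed

lemma wprod_rev_comp: "set xs \<subseteq> I0 \<Longrightarrow> wprod \<alpha> (rev xs) \<circ> wprod \<alpha> xs = id"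
proof (induct "xs")
  case Nil then show ?case by (simp add: wprod_Nil)
next
  case (Cons i xs)
  have "wprod \<alpha> (rev (i#xs)) \<circ> wprod \<alpha> (i#xs) =
      wprod \<alpha> (rev xs) \<circ> (refl (\<alpha> i) \<circ> refl (\<alpha> i)) \<circ> wprod \<alpha> xs"
    by (simp add: wprod_append wprod_Cons wprod_Nil comp_assoc)
  also have "refl (\<alpha> i) \<circ> refl (\<alpha> i) = id" using Cons.prems by (auto simp: refl_refl simple_nonzero)
  finally show ?case using Cons by simp
qed

lemma wprod_comp_rev: "set xs \<subseteq> I0 \<Longrightarrow> wprod \<alpha> xs \<circ> wprod \<alpha> (rev xs) = id"
  using wprod_rev_comp[of "rev xs"] by simp

lemma weyl_sub_comp: "x \<in> weyl_sub \<alpha> K \<Longrightarrow> y \<in> weyl_sub \<alpha> K \<Longrightarrow> x \<circ> y \<in> weyl_sub \<alpha> K"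
proof -
  assume "x \<in> weyl_sub \<alpha> K" "y \<in> weyl_sub \<alpha> K"
  then obtain xs ys where "set xs \<subseteq> K" "x = wprod \<alpha> xs" "set ys \<subseteq> K" "y = wprod \<alpha> ys"
    unfolding weyl_sub_iff by blast
  then show ?thesis unfolding weyl_sub_iff by (intro exI[of _ "xs @ ys"]) (simp add: wprod_append)
qed

lemma weyl_sub_id: "id \<in> weyl_sub \<alpha> K"
  unfolding weyl_sub_iff by (intro exI[of _ "[]"]) (simp add: wprod_Nil)

lemma weyl_sub_refl: "i \<in> K \<Longrightarrow> refl (\<alpha> i) \<in> weyl_sub \<alpha> K"
  unfolding weyl_sub_iff by (intro exI[of _ "[i]"]) (simp add: wprod_Cons wprod_Nil)

lemma weyl_sub_mono: "K \<subseteq> I0 \<Longrightarrow> weyl_sub \<alpha> K \<subseteq> W"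
  unfolding weyl_sub_def by blast

lemma weyl_sub_inverse: "K \<subseteq> I0 \<Longrightarrow> x \<in> weyl_sub \<alpha> K \<Longrightarrow> \<exists>y\<in>weyl_sub \<alpha> K. y \<circ> x = id \<and> x \<circ> y = id"
proof -
  assume K: "K \<subseteq> I0" and "x \<in> weyl_sub \<alpha> K"
  then obtain xs where xs: "set xs \<subseteq> K" "x = wprod \<alpha> xs" unfolding weyl_sub_iff by blast
  have "set xs \<subseteq> I0" using xs K by blast
  then have "wprod \<alpha> (rev xs) \<circ> x = id \<and> x \<circ> wprod \<alpha> (rev xs) = id"
    using xs wprod_rev_comp wprod_comp_rev by simp
  moreover have "wprod \<alpha> (rev xs) \<in> weyl_sub \<alpha> K" unfolding weyl_sub_iff using xs
    by (intro exI[of _ "rev xs"]) auto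
  ultimately show ?thesis by blast
qed

lemma weyl_orthogonal: "x \<in> W \<Longrightarrow> orthogonal_transformation x"
  unfolding weyl_sub_iff using orthogonal_transformation_wprod by blast

lemma weyl_root: "x \<in> W \<Longrightarrow> b \<in> R \<Longrightarrow> x b \<in> R"
  unfolding weyl_sub_iff using wprod_root by blast

lemma weyl_root_surj: "x \<in> W \<Longrightarrow> b \<in> R \<Longrightarrow> \<exists>a\<in>R. x a = b"
proof -
  assume x: "x \<in> W" and b: "b \<in> R"
  obtain y where y: "y \<in> W" "y \<circ> x = id" "x \<circ> y = id" using weyl_sub_inverse[OF order_refl x]
    by blast
  have "x (y b) = b" using y(3) by (metis comp_apply id_apply)
  then show ?thesis using weyl_root[OF y(1) b] by blast
qed

definition root_coeff :: "'a \<Rightarrow> 'i \<Rightarrow> int" where "root_coeff b = (SOME c. b = rcomb I0 \<alpha> c)"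

lemma root_coeff_eq: "b = rcomb I0 \<alpha> c \<Longrightarrow> b = rcomb I0 \<alpha> (root_coeff b)"
  unfolding root_coeff_def by (rule someI[of "\<lambda>c. b = rcomb I0 \<alpha> c"])

lemma root_coeff_unique: "b = rcomb I0 \<alpha> c \<Longrightarrow> i\<in>I0 \<Longrightarrow> root_coeff b i = c i"
  using root_coeff_eq rcomb_unique by metis

lemma root_coeff_root: "b \<in> R \<Longrightarrow> b = rcomb I0 \<alpha> (root_coeff b)"
  using root_expansion root_coeff_eq by blast

definition height :: "'a \<Rightarrow> int" where "height b = (\<Sum>i\<in>I0. root_coeff b i)"

lemma root_coeff_pos_nonneg: "b \<in> pos \<Longrightarrow> i\<in>I0 \<Longrightarrow> 0 \<le> root_coeff b i"
proof -
  assume "b \<in> pos" "i\<in>I0"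
  then obtain c where "\<forall>i\<in>I0. 0 \<le> c i" "b = rcomb I0 \<alpha> c" unfolding mem_pos_iff nonneg_comb_def
    by blast
  then show ?thesis using root_coeff_unique \<open>i\<in>I0\<close> by simp
qed

lemma height_pos: "b \<in> pos \<Longrightarrow> 1 \<le> height b"
proof (rule ccontr)
  assume b: "b \<in> pos" and "\<not> 1 \<le> height b"
  moreover have "0 \<le> height b" unfolding height_def using root_coeff_pos_nonneg[OF b]
    by (simp add: sum_nonneg)
  ultimately have "height b = 0" by simp
  then have "\<forall>i\<in>I0. root_coeff b i = 0" unfolding height_def
    using sum_nonneg_eq_0_iff[OF finite_index] root_coeff_pos_nonneg[OF b] by blast
  then have "rcomb I0 \<alpha> (root_coeff b) = rcomb I0 \<alpha> (\<lambda>i. 0)" by (intro rcomb_cong) auto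
  then have "b = rcomb I0 \<alpha> (\<lambda>i. 0)" using root_coeff_root[OF pos_root[OF b]] by simp
  then have "b = 0" by (simp add: rcomb_def)
  then show False using b pos_root root_nonzero by blast
qed

lemma height_refl: assumes b: "b\<in>R" and i: "i\<in>I0" and t: "coroot_pair b (\<alpha> i) = of_int t"
  shows "height (refl (\<alpha> i) b) = height b - t"
proof -
  have bb: "b = rcomb I0 \<alpha> (root_coeff b)" using root_coeff_root[OF b] .
  have "refl (\<alpha> i) b = rcomb I0 \<alpha> (\<lambda>j. root_coeff b j - (if j = i then t else 0))"
    using refl_rcomb[OF i, of "root_coeff b" t] t bb by simp
  then have "\<forall>j\<in>I0. root_coeff (refl (\<alpha> i) b) j = root_coeff b j - (if j = i then t else 0)"
    using root_coeff_unique by blast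
  then have "height (refl (\<alpha> i) b) = (\<Sum>j\<in>I0. root_coeff b j - (if j = i then t else 0))"
    unfolding height_def
    by (intro sum.cong) auto
  also have "\<dots> = height b - t" unfolding height_def using finite_index i
    by (simp add: sum_subtractf)
  finally show ?thesis .
qed

lemma pos_inner_simple_pos: assumes b: "b \<in> pos" shows "\<exists>i\<in>I0. b \<bullet> \<alpha> i > 0"
proof (rule ccontr)
  assume "\<not> ?thesis"
  then have le: "\<forall>i\<in>I0. b \<bullet> \<alpha> i \<le> 0" by auto
  have "b \<bullet> b = b \<bullet> rcomb I0 \<alpha> (root_coeff b)" using root_coeff_root[OF pos_root[OF b]] by simp
  also have "\<dots> = (\<Sum>i\<in>I0. of_int (root_coeff b i) * (b \<bullet> \<alpha> i))"
    by (simp add: rcomb_def inner_sum_right)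
  also have "\<dots> \<le> 0" using le root_coeff_pos_nonneg[OF b]
    by (intro sum_nonpos) (simp add: mult_nonneg_nonpos)
  finally have "b \<bullet> b \<le> 0" .
  moreover have "b \<bullet> b > 0" using root_nonzero[OF pos_root[OF b]] by simp
  ultimately show False by simp
qed

lemma pos_weyl_conj_simple: "b \<in> pos \<Longrightarrow> \<exists>y\<in>W. \<exists>j\<in>I0. b = y (\<alpha> j)"
proof (induct "nat (height b)" arbitrary: b rule: less_induct)
  case less
  obtain i where i: "i\<in>I0" "b \<bullet> \<alpha> i > 0" using pos_inner_simple_pos[OF less.prems] by blast
  show ?case
  proof (cases "b = \<alpha> i")
    case True
    show ?thesis by (rule bexI[of _ id], rule bexI[of _ i]) (use True i weyl_sub_id in auto)
  next
    case False
    let ?b' = "refl (\<alpha> i) b"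
    have b'pos: "?b' \<in> pos" using refl_simple_pos[OF i(1) less.prems False] .
    obtain t where t: "coroot_pair b (\<alpha> i) = of_int t"
      using coroot_pair_int[OF simple_root[OF i(1)] pos_root[OF less.prems]] by blast
    have "coroot_pair b (\<alpha> i) > 0" using coroot_pair_sign[OF simple_nonzero[OF i(1)]] i(2) by blast
    then have t1: "t \<ge> 1" using t by simp
    have "height ?b' = height b - t" using height_refl[OF pos_root[OF less.prems] i(1) t] .
    moreover have "height ?b' \<ge> 1" using height_pos[OF b'pos] .
    ultimately have "nat (height ?b') < nat (height b)" using t1 by simp
    then obtain y j where y: "y\<in>W" "j\<in>I0" "?b' = y (\<alpha> j)" using less.hyps b'pos by blast
    have "b = refl (\<alpha> i) ?b'" using refl_refl[OF simple_nonzero[OF i(1)]] by simp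
    also have "\<dots> = (refl (\<alpha> i) \<circ> y) (\<alpha> j)" using y(3) by simp
    finally show ?thesis using weyl_sub_comp[OF weyl_sub_refl[OF i(1)] y(1)] y(2) by blast
  qed
qed

lemma refl_in_weyl: assumes b: "b \<in> R" shows "refl b \<in> W"
proof -
  obtain b0 where b0: "b0 \<in> pos" "refl b0 = refl b"
    using pos_or_minus_pos[OF b] refl_minus[of b] by metis
  obtain y j where y: "y\<in>W" "j\<in>I0" "b0 = y (\<alpha> j)" using pos_weyl_conj_simple[OF b0(1)] by blast
  obtain y' where y': "y' \<in> W" "y' \<circ> y = id" "y \<circ> y' = id"
    using weyl_sub_inverse[OF order_refl y(1)] by blast
  have "refl b0 = y \<circ> refl (\<alpha> j) \<circ> y'"
  proof
    fix x
    have "(y \<circ> refl (\<alpha> j) \<circ> y') x = refl (y (\<alpha> j)) (y (y' x))"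
      using orthogonal_transformation_refl_conj[OF weyl_orthogonal[OF y(1)]] by simp
    also have "y (y' x) = x" using y'(3) by (metis comp_apply id_apply)
    finally show "refl b0 x = (y \<circ> refl (\<alpha> j) \<circ> y') x" using y(3) by simp
  qed
  then show ?thesis using b0(2) weyl_sub_comp[OF weyl_sub_comp[OF y(1) weyl_sub_refl[OF y(2)]]
      y'(1)] by simp
qed

section \<open>Inversion sets and length\<close>

definition inversions :: "('a \<Rightarrow> 'a) \<Rightarrow> 'a set" where "inversions x = {\<delta>\<in>pos. x \<delta> \<notin> pos}"

lemma finite_inversions: "finite (inversions x)" unfolding inversions_def using finite_pos by simp

lemma inversions_id: "inversions (\<lambda>a. a) = {}" by (auto simp: inversions_def)

lemma deletion_property: "set xs \<subseteq> I0 \<Longrightarrow> j \<in> I0 \<Longrightarrow> wprod \<alpha> xs (\<alpha> j) \<notin> pos \<Longrightarrow>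
   \<exists>ys. set ys \<subseteq> I0 \<and> length ys + 1 = length xs \<and> wprod \<alpha> xs \<circ> refl (\<alpha> j) = wprod \<alpha> ys"
proof (induct xs)
  case Nil then show ?case using simple_pos by (simp add: wprod_Nil)
next
  case (Cons k xs)
  let ?y = "wprod \<alpha> xs"
  have k: "k\<in>I0" and xs: "set xs \<subseteq> I0" using Cons.prems by auto
  show ?case
  proof (cases "?y (\<alpha> j) \<in> pos")
    case False
    then obtain ys where ys: "set ys \<subseteq> I0" "length ys + 1 = length xs" "?y \<circ> refl (\<alpha> j) =
        wprod \<alpha> ys"
      using Cons.hyps xs Cons.prems(2) by blast
    have "wprod \<alpha> (k#xs) \<circ> refl (\<alpha> j) = refl (\<alpha> k) \<circ> (?y \<circ> refl (\<alpha> j))"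
      by (simp add: wprod_Cons comp_assoc)
    also have "\<dots> = wprod \<alpha> (k#ys)" using ys(3) by (simp add: wprod_Cons)
    finally show ?thesis using ys k by (intro exI[of _ "k#ys"]) simp
  next
    case True
    have "refl (\<alpha> k) (?y (\<alpha> j)) \<notin> pos" using Cons.prems(3) by (simp add: wprod_Cons)
    then have eq: "?y (\<alpha> j) = \<alpha> k" using refl_simple_pos[OF k True] by blast
    have c: "?y \<circ> refl (\<alpha> j) = refl (\<alpha> k) \<circ> ?y"
    proof
      fix x show "(?y \<circ> refl (\<alpha> j)) x = (refl (\<alpha> k) \<circ> ?y) x"
        using orthogonal_transformation_refl_conj[OF orthogonal_transformation_wprod[OF xs]] eq
          by simp
    qed
    have rr: "refl (\<alpha> k) \<circ> refl (\<alpha> k) = id" using refl_refl[OF simple_nonzero[OF k]]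
      by (auto simp: fun_eq_iff)
    have "wprod \<alpha> (k#xs) \<circ> refl (\<alpha> j) = refl (\<alpha> k) \<circ> (?y \<circ> refl (\<alpha> j))"
      by (simp add: wprod_Cons comp_assoc)
    also have "\<dots> = (refl (\<alpha> k) \<circ> refl (\<alpha> k)) \<circ> ?y" using c by (simp add: comp_assoc)
    also have "\<dots> = ?y" using rr by simp
    finally show ?thesis using xs by (intro exI[of _ xs]) simp
  qed
qed

lemma inversions_comp_refl_simple:
  assumes x: "orthogonal_transformation x" and j: "j \<in> I0" and xa: "x (\<alpha> j) \<in> pos"
  shows "inversions (x \<circ> refl (\<alpha> j)) = insert (\<alpha> j) (refl (\<alpha> j) ` inversions x)"
proof -
  have aj: "\<alpha> j \<noteq> 0" using simple_nonzero[OF j] .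
  show ?thesis
  proof (intro equalityI subsetI)
    fix \<delta> assume "\<delta> \<in> inversions (x \<circ> refl (\<alpha> j))"
    then have d: "\<delta>\<in>pos" "x (refl (\<alpha> j) \<delta>) \<notin> pos" by (auto simp: inversions_def)
    show "\<delta> \<in> insert (\<alpha> j) (refl (\<alpha> j) ` inversions x)"
    proof (cases "\<delta> = \<alpha> j")
      case True then show ?thesis by simp
    next
      case False
      then have "refl (\<alpha> j) \<delta> \<in> pos" using refl_simple_pos[OF j d(1)] by blast
      then have "refl (\<alpha> j) \<delta> \<in> inversions x" using d(2) by (simp add: inversions_def)
      moreover have "\<delta> = refl (\<alpha> j) (refl (\<alpha> j) \<delta>)" using refl_refl[OF aj] by simp
      ultimately show ?thesis by blast
    qed
  next
    fix \<delta> assume "\<delta> \<in> insert (\<alpha> j) (refl (\<alpha> j) ` inversions x)"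
    then show "\<delta> \<in> inversions (x \<circ> refl (\<alpha> j))"
    proof
      assume da: "\<delta> = \<alpha> j"
      have "x (refl (\<alpha> j) (\<alpha> j)) = - x (\<alpha> j)"
        using refl_self[OF aj] orthogonal_transformation_minus[OF x] by simp
      then show ?thesis using da simple_pos[OF j] pos_minus_not_pos[OF xa]
        by (simp add: inversions_def)
    next
      assume "\<delta> \<in> refl (\<alpha> j) ` inversions x"
      then obtain \<gamma> where g: "\<gamma> \<in> inversions x" "\<delta> = refl (\<alpha> j) \<gamma>" by blast
      have gp: "\<gamma>\<in>pos" "x \<gamma> \<notin> pos" using g(1) by (auto simp: inversions_def)
      have "\<gamma> \<noteq> \<alpha> j" using gp xa by blast
      then have "\<delta> \<in> pos" using refl_simple_pos[OF j gp(1)] g(2) by simp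
      moreover have "x (refl (\<alpha> j) \<delta>) = x \<gamma>" using g(2) refl_refl[OF aj] by simp
      ultimately show ?thesis using gp(2) by (simp add: inversions_def)
    qed
  qed
qed

lemma card_inversions_refl_right:
  assumes x: "orthogonal_transformation x" and j: "j \<in> I0" and xa: "x (\<alpha> j) \<in> pos"
  shows "card (inversions (x \<circ> refl (\<alpha> j))) = card (inversions x) + 1"
proof -
  have aj: "\<alpha> j \<noteq> 0" using simple_nonzero[OF j] .
  have nin: "\<alpha> j \<notin> refl (\<alpha> j) ` inversions x"
  proof
    assume "\<alpha> j \<in> refl (\<alpha> j) ` inversions x"
    then obtain \<gamma> where g: "\<gamma> \<in> inversions x" "\<alpha> j = refl (\<alpha> j) \<gamma>" by blast
    have "refl (\<alpha> j) (\<alpha> j) = refl (\<alpha> j) (refl (\<alpha> j) \<gamma>)" using g(2) by simp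
    also have "\<dots> = \<gamma>" using refl_refl[OF aj] by simp
    finally have "\<gamma> = - \<alpha> j" using refl_self[OF aj] by simp
    then show False using g(1) pos_minus_not_pos[OF simple_pos[OF j]] by (simp add: inversions_def)
  qed
  have "inj_on (refl (\<alpha> j)) (inversions x)"
    using orthogonal_transformation_inj[OF orthogonal_transformation_refl[OF aj]]
      by (simp add: inj_on_def inj_def)
  then have "card (refl (\<alpha> j) ` inversions x) = card (inversions x)" by (rule card_image)
  then show ?thesis
    using inversions_comp_refl_simple[OF x j xa] nin finite_inversions
      by (simp add: card_insert_disjoint)
qed

lemma wlen_le: "set xs \<subseteq> I0 \<Longrightarrow> wlen \<alpha> I0 (wprod \<alpha> xs) \<le> length xs"
  unfolding wlen_def by (rule Least_le) blast

lemma wlen_reduced_word: assumes "x \<in> W"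
  shows "\<exists>xs. set xs \<subseteq> I0 \<and> length xs = wlen \<alpha> I0 x \<and> wprod \<alpha> xs = x"
proof -
  obtain xs where xs: "set xs \<subseteq> I0" "x = wprod \<alpha> xs" using assms unfolding weyl_sub_iff by blast
  have "\<exists>n. \<exists>xs. set xs \<subseteq> I0 \<and> length xs = n \<and> wprod \<alpha> xs = x" using xs by blast
  then show ?thesis unfolding wlen_def by (rule LeastI_ex)
qed

lemma card_inversions_reduced: "set xs \<subseteq> I0 \<Longrightarrow> wlen \<alpha> I0 (wprod \<alpha> xs) =
    length xs \<Longrightarrow> card (inversions (wprod \<alpha> xs)) = length xs"
proof (induct xs rule: rev_induct)
  case Nil show ?case by (simp add: wprod_Nil inversions_id)
next
  case (snoc j xs)
  let ?y = "wprod \<alpha> xs"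
  have xs: "set xs \<subseteq> I0" and j: "j\<in>I0" using snoc.prems by auto
  have yW: "?y \<in> W" unfolding weyl_sub_iff using xs by blast
  have min: "wlen \<alpha> I0 ?y = length xs"
  proof (rule ccontr)
    assume "wlen \<alpha> I0 ?y \<noteq> length xs"
    then have lt: "wlen \<alpha> I0 ?y < length xs" using wlen_le[OF xs] by simp
    obtain zs where zs: "set zs \<subseteq> I0" "length zs = wlen \<alpha> I0 ?y" "wprod \<alpha> zs = ?y"
      using wlen_reduced_word[OF yW] by blast
    have "wprod \<alpha> (zs @ [j]) = wprod \<alpha> (xs @ [j])" using zs(3) by (simp add: wprod_append)
    moreover have "set (zs @ [j]) \<subseteq> I0" using zs j by simp
    ultimately have "wlen \<alpha> I0 (wprod \<alpha> (xs @ [j])) \<le> length (zs @ [j])" using wlen_le by metis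
    then show False using snoc.prems(2) lt zs(2) by simp
  qed
  have cy: "card (inversions ?y) = length xs" using snoc.hyps[OF xs min] .
  have ya: "?y (\<alpha> j) \<in> pos"
  proof (rule ccontr)
    assume "?y (\<alpha> j) \<notin> pos"
    then obtain ys where ys: "set ys \<subseteq> I0" "length ys + 1 = length xs" "?y \<circ> refl (\<alpha> j) =
        wprod \<alpha> ys"
      using deletion_property[OF xs j] by blast
    have "wprod \<alpha> (xs @ [j]) = wprod \<alpha> ys" using ys(3) by (simp add: wprod_snoc)
    then have "wlen \<alpha> I0 (wprod \<alpha> (xs @ [j])) \<le> length ys" using wlen_le[OF ys(1)] by simp
    then show False using snoc.prems(2) ys(2) by simp
  qed
  have "card (inversions (wprod \<alpha> (xs @ [j]))) = card (inversions ?y) + 1"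
    unfolding wprod_snoc
      by (rule card_inversions_refl_right[OF orthogonal_transformation_wprod[OF xs] j ya])
  then show ?case using cy by simp
qed

lemma wlen_eq_card_inversions: "x \<in> W \<Longrightarrow> wlen \<alpha> I0 x = card (inversions x)"
  using wlen_reduced_word card_inversions_reduced by metis

lemma inversions_empty_imp_id: "x \<in> W \<Longrightarrow> inversions x = {} \<Longrightarrow> x = id"
proof -
  assume x: "x \<in> W" "inversions x = {}"
  then have "wlen \<alpha> I0 x = 0" using wlen_eq_card_inversions by simp
  then obtain xs where "length xs = 0" "wprod \<alpha> xs = x" using wlen_reduced_word[OF x(1)] by metis
  then show ?thesis by (simp add: wprod_Nil)
qed

end

section \<open>Minimal coset representatives\<close>

locale parabolic_root_system = based_root_system R I0 \<alpha> for R :: "'a::euclidean_space set"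
  and I0 :: "'i set" and \<alpha> +
  fixes \<Lambda> :: 'a and m :: "'i \<Rightarrow> nat" and J :: "'i set"
  assumes lam: "\<forall>i\<in>I0. coroot_pair \<Lambda> (\<alpha> i) = real (m i)"
    and J_def: "J = {j\<in>I0. coroot_pair \<Lambda> (\<alpha> j) = 0}"
begin

definition pos_off_J :: "'a set" where "pos_off_J = {\<eta>\<in>R. 0 < \<Lambda> \<bullet> \<eta>}"

definition par_length :: "('a \<Rightarrow> 'a) \<Rightarrow> nat" where "par_length x = card {\<delta>\<in>pos_off_J. x \<delta> \<notin> pos}"

abbreviation WJ where "WJ \<equiv> weyl_sub \<alpha> J"

lemma J_subset: "J \<subseteq> I0" using J_def by auto

lemma weyl_J_weyl: "x \<in> WJ \<Longrightarrow> x \<in> W" using weyl_sub_mono[OF J_subset] by blast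

lemma inner_Lambda_simple_nonneg: "i\<in>I0 \<Longrightarrow> 0 \<le> \<Lambda> \<bullet> \<alpha> i"
  using lam coroot_pair_sign[OF simple_nonzero] by (metis not_le of_nat_less_0_iff)

lemma inner_Lambda_simple_eq_0_iff: "i\<in>I0 \<Longrightarrow> \<Lambda> \<bullet> \<alpha> i = 0 \<longleftrightarrow> i \<in> J"
  using J_def coroot_pair_sign[OF simple_nonzero] by auto

lemma inner_Lambda_rcomb: "\<Lambda> \<bullet> rcomb I0 \<alpha> c = (\<Sum>i\<in>I0. of_int (c i) * (\<Lambda> \<bullet> \<alpha> i))"
  by (simp add: rcomb_def inner_sum_right)

lemma inner_Lambda_nonneg_comb: assumes "nonneg_comb v" shows "0 \<le> \<Lambda> \<bullet> v"
proof -
  obtain c where c: "\<forall>i\<in>I0. 0 \<le> c i" "v = rcomb I0 \<alpha> c" using assms nonneg_comb_def by blast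
  show ?thesis unfolding c(2) inner_Lambda_rcomb using c(1) inner_Lambda_simple_nonneg
    by (intro sum_nonneg) simp
qed

lemma pos_off_J_root: "\<eta> \<in> pos_off_J \<Longrightarrow> \<eta> \<in> R" by (simp add: pos_off_J_def)

lemma finite_pos_off_J: "finite pos_off_J"
  by (rule finite_subset[OF _ finite_roots]) (auto simp: pos_off_J_def)

lemma pos_off_J_pos: assumes "\<eta> \<in> pos_off_J" shows "\<eta> \<in> pos"
proof (rule ccontr)
  assume "\<eta> \<notin> pos"
  then have "nonneg_comb (-\<eta>)" using not_pos_iff_nonneg_comb_minus pos_off_J_root[OF assms] by blast
  then have "0 \<le> \<Lambda> \<bullet> (-\<eta>)" by (rule inner_Lambda_nonneg_comb)
  then show False using assms by (simp add: pos_off_J_def)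
qed

lemma inner_Lambda_pos: "\<eta> \<in> pos \<Longrightarrow> 0 \<le> \<Lambda> \<bullet> \<eta>" using inner_Lambda_nonneg_comb mem_pos_iff by blast

lemma root_coeff_outside_J: assumes e: "\<eta> \<in> pos" "\<Lambda> \<bullet> \<eta> = 0" "i \<in> I0" "i \<notin> J"
  shows "root_coeff \<eta> i = 0"
proof -
  have "\<Lambda> \<bullet> \<eta> = \<Lambda> \<bullet> rcomb I0 \<alpha> (root_coeff \<eta>)"
    by (rule arg_cong[OF root_coeff_root[OF pos_root[OF e(1)]]])
  also have "\<dots> = (\<Sum>i\<in>I0. of_int (root_coeff \<eta> i) * (\<Lambda> \<bullet> \<alpha> i))" by (rule inner_Lambda_rcomb)
  finally have sum0: "(\<Sum>i\<in>I0. of_int (root_coeff \<eta> i) * (\<Lambda> \<bullet> \<alpha> i)) = 0" using e(2) by simp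
  have nn: "\<And>j. j \<in> I0 \<Longrightarrow> 0 \<le> of_int (root_coeff \<eta> j) * (\<Lambda> \<bullet> \<alpha> j)"
    using root_coeff_pos_nonneg[OF e(1)] inner_Lambda_simple_nonneg
      by (intro mult_nonneg_nonneg) simp_all
  have "of_int (root_coeff \<eta> i) * (\<Lambda> \<bullet> \<alpha> i) = 0"
    by (rule sum_nonneg_0[where f="\<lambda>j. of_int (root_coeff \<eta> j) * (\<Lambda> \<bullet> \<alpha> j)", OF finite_index nn
        sum0 e(3)])
  moreover have "\<Lambda> \<bullet> \<alpha> i \<noteq> 0" using inner_Lambda_simple_eq_0_iff e(3,4) by blast
  ultimately show ?thesis by simp
qed

lemma pos_off_J_eq: "pos_off_J = pos_roots R I0 \<alpha> - pos_roots_J R I0 \<alpha> J"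
proof (intro equalityI subsetI)
  fix \<eta> assume e: "\<eta> \<in> pos_off_J"
  have "\<eta> \<notin> pos_roots_J R I0 \<alpha> J"
  proof
    assume "\<eta> \<in> pos_roots_J R I0 \<alpha> J"
    then obtain c where c: "\<forall>i\<in>I0 - J. c i = 0" "\<eta> = rcomb I0 \<alpha> c" unfolding pos_roots_J_def
      by blast
    have "\<Lambda> \<bullet> \<eta> = (\<Sum>i\<in>I0. of_int (c i) * (\<Lambda> \<bullet> \<alpha> i))" using c(2) inner_Lambda_rcomb by simp
    also have "\<dots> = 0" using c(1) inner_Lambda_simple_eq_0_iff by (intro sum.neutral) auto
    finally show False using e by (simp add: pos_off_J_def)
  qed
  then show "\<eta> \<in> pos_roots R I0 \<alpha> - pos_roots_J R I0 \<alpha> J" using pos_off_J_pos[OF e] by simp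
next
  fix \<eta> assume "\<eta> \<in> pos_roots R I0 \<alpha> - pos_roots_J R I0 \<alpha> J"
  then have e: "\<eta> \<in> pos" "\<eta> \<notin> pos_roots_J R I0 \<alpha> J" by auto
  have "\<Lambda> \<bullet> \<eta> \<noteq> 0"
  proof
    assume z: "\<Lambda> \<bullet> \<eta> = 0"
    have "\<forall>i\<in>I0 - J. root_coeff \<eta> i = 0" using root_coeff_outside_J[OF e(1) z] by blast
    then have "\<eta> \<in> pos_roots_J R I0 \<alpha> J" unfolding pos_roots_J_def
      using e(1) root_coeff_root[OF pos_root[OF e(1)]] by blast
    then show False using e(2) by blast
  qed
  then show "\<eta> \<in> pos_off_J" using inner_Lambda_pos[OF e(1)] pos_root[OF e(1)]
    by (simp add: pos_off_J_def)
qed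

lemma WJ_fixes_Lambda: "v \<in> WJ \<Longrightarrow> v \<Lambda> = \<Lambda>"
proof -
  assume "v \<in> WJ"
  then obtain xs where xs: "set xs \<subseteq> J" "v = wprod \<alpha> xs" unfolding weyl_sub_iff by blast
  have "\<forall>j\<in>set xs. refl (\<alpha> j) \<Lambda> = \<Lambda>"
  proof
    fix j assume "j \<in> set xs"
    then have "j \<in> J" using xs by blast
    then have "coroot_pair \<Lambda> (\<alpha> j) = 0" using J_def by blast
    then show "refl (\<alpha> j) \<Lambda> = \<Lambda>" by (simp add: refl_def)
  qed
  then show ?thesis using xs wprod_fix by metis
qed

lemma inner_Lambda_WJ: "v \<in> WJ \<Longrightarrow> \<Lambda> \<bullet> v \<eta> = \<Lambda> \<bullet> \<eta>"
  using WJ_fixes_Lambda orthogonal_transformation_inner[OF weyl_orthogonal[OF weyl_J_weyl]] by metis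

lemma WJ_pos_off_J_iff: "v \<in> WJ \<Longrightarrow> \<delta> \<in> R \<Longrightarrow> v \<delta> \<in> pos_off_J \<longleftrightarrow> \<delta> \<in> pos_off_J"
  using inner_Lambda_WJ weyl_root[OF weyl_J_weyl] by (auto simp: pos_off_J_def)

lemma WJ_image_pos_off_J: assumes v: "v \<in> WJ" shows "v ` pos_off_J = pos_off_J"
proof (intro equalityI subsetI)
  fix x assume "x \<in> v ` pos_off_J" then show "x \<in> pos_off_J"
    using WJ_pos_off_J_iff[OF v] pos_off_J_root by blast
next
  fix x assume x: "x \<in> pos_off_J"
  obtain a where a: "a \<in> R" "v a = x"
    using weyl_root_surj[OF weyl_J_weyl[OF v] pos_off_J_root[OF x]] by blast
  then have "a \<in> pos_off_J" using WJ_pos_off_J_iff[OF v] x by blast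
  then show "x \<in> v ` pos_off_J" using a by blast
qed

lemma par_length_comp_WJ: assumes v: "v \<in> WJ" shows "par_length (x \<circ> v) = par_length x"
proof -
  have "v ` {\<delta>\<in>pos_off_J. x (v \<delta>) \<notin> pos} = {\<delta>\<in>pos_off_J. x \<delta> \<notin> pos}"
    using WJ_image_pos_off_J[OF v] by auto
  moreover have "inj_on v {\<delta>\<in>pos_off_J. x (v \<delta>) \<notin> pos}"
    using orthogonal_transformation_inj[OF weyl_orthogonal[OF weyl_J_weyl[OF v]]]
      by (simp add: inj_on_def inj_def)
  ultimately show ?thesis unfolding par_length_def using card_image by fastforce
qed

lemma nonneg_comb_zero: "nonneg_comb 0"
  unfolding nonneg_comb_def by (intro exI[of _ "\<lambda>i. 0"]) (simp add: rcomb_def)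

lemma nonneg_comb_sum: "finite A \<Longrightarrow> (\<And>i. i \<in> A \<Longrightarrow> nonneg_comb (f i)) \<Longrightarrow> nonneg_comb (\<Sum>i\<in>A. f i)"
  by (induct A rule: finite_induct) (auto simp: nonneg_comb_zero nonneg_comb_add)

lemma parabolic_pos_image:
  assumes u: "u \<in> W" and d: "\<delta> \<in> pos" "\<Lambda> \<bullet> \<delta> = 0" and aj: "\<forall>j\<in>J. u (\<alpha> j) \<in> pos"
  shows "u \<delta> \<in> pos"
proof -
  have uo: "orthogonal_transformation u" using weyl_orthogonal[OF u] .
  have "u \<delta> = u (rcomb I0 \<alpha> (root_coeff \<delta>))"
    by (rule arg_cong[OF root_coeff_root[OF pos_root[OF d(1)]]])
  also have "\<dots> = (\<Sum>i\<in>I0. of_int (root_coeff \<delta> i) *\<^sub>R u (\<alpha> i))"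
    unfolding rcomb_def orthogonal_transformation_sum[OF uo] orthogonal_transformation_scaleR[OF
        uo] ..
  finally have ud: "u \<delta> = (\<Sum>i\<in>I0. of_int (root_coeff \<delta> i) *\<^sub>R u (\<alpha> i))" .
  have "nonneg_comb (of_int (root_coeff \<delta> i) *\<^sub>R u (\<alpha> i))" if i: "i \<in> I0" for i
  proof (cases "i \<in> J")
    case True
    then show ?thesis using aj mem_pos_iff nonneg_comb_scale root_coeff_pos_nonneg[OF d(1) i]
      by blast
  next
    case False
    then show ?thesis using root_coeff_outside_J[OF d i] by (simp add: nonneg_comb_zero)
  qed
  then have "nonneg_comb (u \<delta>)" unfolding ud by (rule nonneg_comb_sum[OF finite_index])
  then show ?thesis using weyl_root[OF u pos_root[OF d(1)]] mem_pos_iff by simp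
qed

lemma min_reps_simple_J_pos:
  assumes u: "u \<in> min_reps \<alpha> I0 J" and j: "j \<in> J"
  shows "u (\<alpha> j) \<in> pos"
proof (rule ccontr)
  assume neg: "u (\<alpha> j) \<notin> pos"
  have uW: "u \<in> W" and umin: "\<forall>v\<in>WJ. wlen \<alpha> I0 u \<le> wlen \<alpha> I0 (u \<circ> v)"
    using u by (auto simp: min_reps_def)
  have jI: "j \<in> I0" using j J_subset by blast
  let ?u' = "u \<circ> refl (\<alpha> j)"
  have u'W: "?u' \<in> W" using weyl_sub_comp[OF uW weyl_sub_refl[OF jI]] .
  have "?u' (\<alpha> j) = - u (\<alpha> j)"
    using refl_self[OF simple_nonzero[OF jI]] orthogonal_transformation_minus[OF
        weyl_orthogonal[OF uW]] by simp
  then have "?u' (\<alpha> j) \<in> pos"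
    using not_pos_iff_minus_pos[OF weyl_root[OF uW simple_root[OF jI]]] neg by simp
  then have "card (inversions (?u' \<circ> refl (\<alpha> j))) = card (inversions ?u') + 1"
    by (rule card_inversions_refl_right[OF weyl_orthogonal[OF u'W] jI])
  moreover have "?u' \<circ> refl (\<alpha> j) = u" using refl_refl[OF simple_nonzero[OF jI]]
    by (simp add: fun_eq_iff)
  ultimately have "wlen \<alpha> I0 ?u' < wlen \<alpha> I0 u"
    using wlen_eq_card_inversions[OF uW] wlen_eq_card_inversions[OF u'W] by simp
  moreover have "wlen \<alpha> I0 u \<le> wlen \<alpha> I0 ?u'" using umin weyl_sub_refl[OF j] by blast
  ultimately show False by simp
qed

lemma min_reps_inversions:
  assumes u: "u \<in> min_reps \<alpha> I0 J"
  shows "inversions u \<subseteq> pos_off_J"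
proof
  fix \<delta> assume "\<delta> \<in> inversions u"
  then have d: "\<delta> \<in> pos" "u \<delta> \<notin> pos" by (auto simp: inversions_def)
  have "u \<in> W" using u by (simp add: min_reps_def)
  then have "\<Lambda> \<bullet> \<delta> \<noteq> 0" using parabolic_pos_image d min_reps_simple_J_pos[OF u] by blast
  then show "\<delta> \<in> pos_off_J" using inner_Lambda_pos[OF d(1)] pos_root[OF d(1)]
    by (simp add: pos_off_J_def)
qed

lemma card_inversions_eq_par_length: "inversions u \<subseteq> pos_off_J \<Longrightarrow> card (inversions u) = par_length u"
proof -
  assume "inversions u \<subseteq> pos_off_J"
  then have "inversions u = {\<delta>\<in>pos_off_J. u \<delta> \<notin> pos}" using pos_off_J_pos
    by (auto simp: inversions_def)
  then show ?thesis by (simp add: par_length_def)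
qed

lemma min_rep_exists: assumes x: "x \<in> W" shows "\<exists>u. u \<in> min_reps \<alpha> I0 J \<and> (\<exists>v\<in>WJ. u = x \<circ> v)"
proof -
  let ?Q = "\<lambda>n. \<exists>v\<in>WJ. wlen \<alpha> I0 (x \<circ> v) = n"
  have "?Q (wlen \<alpha> I0 (x \<circ> id))" using weyl_sub_id by blast
  then have "?Q (LEAST n. ?Q n)" by (rule LeastI)
  then obtain v where v: "v \<in> WJ" "wlen \<alpha> I0 (x \<circ> v) = (LEAST n. ?Q n)" by blast
  have "x \<circ> v \<in> min_reps \<alpha> I0 J" unfolding min_reps_def
  proof (intro CollectI conjI ballI)
    show "x \<circ> v \<in> W" using weyl_sub_comp[OF x weyl_J_weyl[OF v(1)]] .
    fix v' assume v': "v' \<in> WJ"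
    have "?Q (wlen \<alpha> I0 (x \<circ> (v \<circ> v')))" using weyl_sub_comp[OF v(1) v'] by blast
    then have "(LEAST n. ?Q n) \<le> wlen \<alpha> I0 (x \<circ> (v \<circ> v'))" by (rule Least_le)
    then show "wlen \<alpha> I0 (x \<circ> v) \<le> wlen \<alpha> I0 (x \<circ> v \<circ> v')" using v(2) by (simp add: comp_assoc)
  qed
  then show ?thesis using v(1) by blast
qed

lemma min_rep_unique: assumes x: "x \<in> W" and u1: "u1 \<in> min_reps \<alpha> I0 J" "v1 \<in> WJ" "u1 = x \<circ> v1"
  and u2: "u2 \<in> min_reps \<alpha> I0 J" "v2 \<in> WJ" "u2 = x \<circ> v2" shows "u1 = u2"
proof -
  obtain v1' where v1': "v1' \<in> WJ" "v1' \<circ> v1 = id" "v1 \<circ> v1' = id"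
    using weyl_sub_inverse[OF J_subset u1(2)] by blast
  let ?y = "v1' \<circ> v2"
  have yJ: "?y \<in> WJ" using weyl_sub_comp[OF v1'(1) u2(2)] .
  have u21: "u2 = u1 \<circ> ?y"
  proof -
    have "u1 \<circ> ?y = x \<circ> (v1 \<circ> v1') \<circ> v2" using u1(3) by (simp add: comp_assoc)
    then show ?thesis using v1'(3) u2(3) by simp
  qed
  have u1W: "u1 \<in> W" using u1(1) by (simp add: min_reps_def)
  have I1: "inversions u1 \<subseteq> pos_off_J" and I2: "inversions u2 \<subseteq> pos_off_J"
    using min_reps_inversions u1(1) u2(1) by auto
  have "inversions ?y = {}"
  proof (rule ccontr)
    assume "inversions ?y \<noteq> {}"
    then obtain \<delta> where d: "\<delta> \<in> pos" "?y \<delta> \<notin> pos" by (auto simp: inversions_def)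
    have dR: "\<delta> \<in> R" using pos_root[OF d(1)] .
    have "\<delta> \<notin> pos_off_J" using WJ_pos_off_J_iff[OF yJ dR] pos_off_J_pos d(2) by blast
    then have z: "\<Lambda> \<bullet> \<delta> = 0" using inner_Lambda_pos[OF d(1)] dR by (auto simp: pos_off_J_def)
    have yR: "?y \<delta> \<in> R" using weyl_root[OF weyl_J_weyl[OF yJ] dR] .
    have my: "- ?y \<delta> \<in> pos" using not_pos_iff_minus_pos[OF yR] d(2) by blast
    have "\<Lambda> \<bullet> (- ?y \<delta>) = 0" using inner_Lambda_WJ[OF yJ] z by simp
    then have "- ?y \<delta> \<notin> pos_off_J" by (simp add: pos_off_J_def)
    then have "- ?y \<delta> \<notin> inversions u1" using I1 by blast
    then have "u1 (- ?y \<delta>) \<in> pos" using my by (simp add: inversions_def)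
    then have "u1 (?y \<delta>) \<notin> pos"
      using orthogonal_transformation_minus[OF weyl_orthogonal[OF u1W]] pos_minus_not_pos by metis
    then have "\<delta> \<in> inversions u2" using u21 d(1) by (simp add: inversions_def)
    then show False using I2 \<open>\<delta> \<notin> pos_off_J\<close> by blast
  qed
  then have "?y = id" using inversions_empty_imp_id[OF weyl_J_weyl[OF yJ]] by blast
  then show ?thesis using u21 by simp
qed

lemma wfloor_eq: assumes x: "x \<in> W" and u: "u \<in> min_reps \<alpha> I0 J" "v \<in> WJ" "u = x \<circ> v"
  shows "wfloor \<alpha> I0 J x = u"
  unfolding wfloor_def
proof (rule the_equality)
  show "u \<in> min_reps \<alpha> I0 J \<and> (\<exists>v\<in>WJ. u = x \<circ> v)" using u by blast
next
  fix u' assume "u' \<in> min_reps \<alpha> I0 J \<and> (\<exists>v\<in>WJ. u' = x \<circ> v)"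
  then obtain v' where "u' \<in> min_reps \<alpha> I0 J" "v' \<in> WJ" "u' = x \<circ> v'" by blast
  then show "u' = u" using min_rep_unique[OF x _ _ _ u] by blast
qed

lemma wfloor_min_rep: assumes x: "x \<in> W"
  shows "wfloor \<alpha> I0 J x \<in> min_reps \<alpha> I0 J \<and> (\<exists>v\<in>WJ. wfloor \<alpha> I0 J x = x \<circ> v)"
proof -
  obtain u v where uv: "u \<in> min_reps \<alpha> I0 J" "v\<in>WJ" "u = x \<circ> v" using min_rep_exists[OF x] by blast
  have "wfloor \<alpha> I0 J x = u" by (rule wfloor_eq[OF x uv])
  then show ?thesis using uv by blast
qed

lemma wfloor_comp_WJ: assumes x: "x \<in> W" and v: "v \<in> WJ"
  shows "wfloor \<alpha> I0 J (x \<circ> v) = wfloor \<alpha> I0 J x"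
proof -
  obtain v0 where v0: "v0 \<in> WJ" "wfloor \<alpha> I0 J x = x \<circ> v0"
    and m: "wfloor \<alpha> I0 J x \<in> min_reps \<alpha> I0 J"
    using wfloor_min_rep[OF x] by blast
  obtain v' where v': "v' \<in> WJ" "v' \<circ> v = id" "v \<circ> v' = id" using weyl_sub_inverse[OF J_subset v]
    by blast
  have "(x \<circ> v) \<circ> (v' \<circ> v0) = x \<circ> (v \<circ> v') \<circ> v0" by (simp only: comp_assoc)
  also have "\<dots> = x \<circ> v0" using v'(3) by simp
  finally have "x \<circ> v0 = (x \<circ> v) \<circ> (v' \<circ> v0)" by simp
  then have eq: "wfloor \<alpha> I0 J x = (x \<circ> v) \<circ> (v' \<circ> v0)" by (rule trans[OF v0(2)])
  show ?thesis by (rule wfloor_eq[OF weyl_sub_comp[OF x weyl_J_weyl[OF v]] m weyl_sub_comp[OF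
      v'(1) v0(1)] eq])
qed

lemma wlen_wfloor: assumes x: "x \<in> W" shows "wlen \<alpha> I0 (wfloor \<alpha> I0 J x) = par_length x"
proof -
  obtain v0 where v0: "v0 \<in> WJ" "wfloor \<alpha> I0 J x = x \<circ> v0"
    and m: "wfloor \<alpha> I0 J x \<in> min_reps \<alpha> I0 J"
    using wfloor_min_rep[OF x] by blast
  have W': "wfloor \<alpha> I0 J x \<in> W" using m by (simp add: min_reps_def)
  have "wlen \<alpha> I0 (wfloor \<alpha> I0 J x) = card (inversions (wfloor \<alpha> I0 J x))"
    using wlen_eq_card_inversions[OF W'] .
  also have "\<dots> = par_length (wfloor \<alpha> I0 J x)"
    using card_inversions_eq_par_length min_reps_inversions[OF m] by blast
  also have "\<dots> = par_length x" using v0 par_length_comp_WJ by simp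
  finally show ?thesis .
qed

lemma wfloor_min_reps: assumes w: "w \<in> min_reps \<alpha> I0 J" shows "wfloor \<alpha> I0 J w = w"
  using wfloor_eq[of w w id] w weyl_sub_id by (simp add: min_reps_def)

section \<open>Change of parabolic length under a reflection\<close>

text \<open>\<open>sum_pos_off_J = 2 (\<rho> - \<rho>\<^sub>J)\<close>; the flip set of \<open>\<beta>\<close> consists of the roots that \<open>s\<^sub>\<beta>\<close>
  moves out of \<open>\<Delta>\<^sub>0\<^sup>+ \<setminus> \<Delta>\<^sub>J\<^sup>+\<close>; \<open>s\<^sub>\<beta>\<close> permutes the others.\<close>

definition sum_pos_off_J :: 'a where "sum_pos_off_J = (\<Sum>\<delta>\<in>pos_off_J. \<delta>)"

definition flip_set :: "'a \<Rightarrow> 'a set" where "flip_set \<beta> = {\<delta>\<in>pos_off_J. refl \<beta> \<delta> \<notin> pos_off_J}"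

lemma card_filter_eq_sum: "finite X \<Longrightarrow> real (card {\<delta>\<in>X. Q \<delta>}) = (\<Sum>\<delta>\<in>X. if Q \<delta> then 1 else 0)"
  using sum.inter_filter[of X "\<lambda>_. (1::real)" Q] by simp

lemma flip_set_subset: "flip_set \<beta> \<subseteq> pos_off_J" by (auto simp: flip_set_def)

lemma finite_flip_set: "finite (flip_set \<beta>)"
  using finite_subset[OF flip_set_subset finite_pos_off_J] .

lemma pos_off_J_inner_Lambda: "\<delta> \<in> pos_off_J \<Longrightarrow> 0 < \<Lambda> \<bullet> \<delta>" by (simp add: pos_off_J_def)

lemma pos_off_J_nonzero: "\<delta> \<in> pos_off_J \<Longrightarrow> \<delta> \<noteq> 0" using pos_off_J_root root_nonzero by blast

lemma flip_set_self: assumes b: "\<beta> \<in> pos_off_J" shows "\<beta> \<in> flip_set \<beta>"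
proof -
  have "refl \<beta> \<beta> = - \<beta>" using refl_self[OF pos_off_J_nonzero[OF b]] .
  then have "refl \<beta> \<beta> \<notin> pos_off_J" using pos_off_J_inner_Lambda[OF b] by (auto simp: pos_off_J_def)
  then show ?thesis using b by (simp add: flip_set_def)
qed

lemma inner_Lambda_refl: "\<Lambda> \<bullet> refl \<beta> \<delta> = \<Lambda> \<bullet> \<delta> - coroot_pair \<delta> \<beta> * (\<Lambda> \<bullet> \<beta>)"
  by (simp add: refl_def inner_diff_right)

lemma flip_set_coroot_pair: assumes b: "\<beta> \<in> pos_off_J" and d: "\<delta> \<in> flip_set \<beta>"
  shows "1 \<le> coroot_pair \<delta> \<beta>"
proof -
  have dP: "\<delta> \<in> pos_off_J" and nP: "refl \<beta> \<delta> \<notin> pos_off_J" using d by (auto simp: flip_set_def)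
  have "refl \<beta> \<delta> \<in> R" using refl_root[OF pos_off_J_root[OF b] pos_off_J_root[OF dP]] .
  then have "\<Lambda> \<bullet> refl \<beta> \<delta> \<le> 0" using nP by (auto simp: pos_off_J_def)
  then have le: "\<Lambda> \<bullet> \<delta> \<le> coroot_pair \<delta> \<beta> * (\<Lambda> \<bullet> \<beta>)" using inner_Lambda_refl by simp
  have "0 < coroot_pair \<delta> \<beta>"
  proof (rule ccontr)
    assume "\<not> 0 < coroot_pair \<delta> \<beta>"
    then have "coroot_pair \<delta> \<beta> * (\<Lambda> \<bullet> \<beta>) \<le> 0" using pos_off_J_inner_Lambda[OF b]
      by (simp add: mult_nonpos_nonneg)
    then show False using le pos_off_J_inner_Lambda[OF dP] by simp
  qed
  moreover obtain t where "coroot_pair \<delta> \<beta> = of_int t"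
    using coroot_pair_int[OF pos_off_J_root[OF b] pos_off_J_root[OF dP]] by blast
  ultimately show ?thesis by simp
qed

lemma coroot_pair_refl_self: "\<beta> \<noteq> 0 \<Longrightarrow> coroot_pair (refl \<beta> \<delta>) \<beta> = - coroot_pair \<delta> \<beta>"
  by (simp add: refl_def coroot_pair_diff coroot_pair_scaleR coroot_pair_self)

lemma refl_outside_flip_set: assumes b: "\<beta> \<in> pos_off_J" and d: "\<delta> \<in> pos_off_J - flip_set \<beta>"
  shows "refl \<beta> \<delta> \<in> pos_off_J - flip_set \<beta>"
proof -
  have r: "refl \<beta> \<delta> \<in> pos_off_J" using d by (auto simp: flip_set_def)
  have "refl \<beta> (refl \<beta> \<delta>) \<in> pos_off_J" using refl_refl[OF pos_off_J_nonzero[OF b]] d by simp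
  then show ?thesis using r by (simp add: flip_set_def)
qed

lemma bij_refl_outside_flip_set: assumes b: "\<beta> \<in> pos_off_J"
  shows "bij_betw (refl \<beta>) (pos_off_J - flip_set \<beta>) (pos_off_J - flip_set \<beta>)"
  unfolding bij_betw_def
proof
  show "inj_on (refl \<beta>) (pos_off_J - flip_set \<beta>)"
    using orthogonal_transformation_inj[OF orthogonal_transformation_refl[OF pos_off_J_nonzero[OF
        b]]] by (simp add: inj_on_def inj_def)
  show "refl \<beta> ` (pos_off_J - flip_set \<beta>) = pos_off_J - flip_set \<beta>"
  proof (intro equalityI subsetI)
    fix x assume "x \<in> refl \<beta> ` (pos_off_J - flip_set \<beta>)" then show "x \<in> pos_off_J - flip_set \<beta>"
      using refl_outside_flip_set[OF b] by blast
  next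
    fix x assume x: "x \<in> pos_off_J - flip_set \<beta>"
    have "x = refl \<beta> (refl \<beta> x)" using refl_refl[OF pos_off_J_nonzero[OF b]] by simp
    then show "x \<in> refl \<beta> ` (pos_off_J - flip_set \<beta>)" using refl_outside_flip_set[OF b x] by blast
  qed
qed

lemma coroot_pair_sum_pos_off_J: assumes b: "\<beta> \<in> pos_off_J"
  shows "coroot_pair sum_pos_off_J \<beta> = (\<Sum>\<delta>\<in>flip_set \<beta>. coroot_pair \<delta> \<beta>)"
proof -
  have "coroot_pair sum_pos_off_J \<beta> = (\<Sum>\<delta>\<in>pos_off_J. coroot_pair \<delta> \<beta>)" unfolding sum_pos_off_J_def
    by (rule coroot_pair_sum)
  also have "\<dots> = (\<Sum>\<delta>\<in>pos_off_J \<inter> flip_set \<beta>. coroot_pair \<delta> \<beta>) +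
      (\<Sum>\<delta>\<in>pos_off_J - flip_set \<beta>. coroot_pair \<delta> \<beta>)"
    by (rule sum.Int_Diff[OF finite_pos_off_J])
  also have "pos_off_J \<inter> flip_set \<beta> = flip_set \<beta>" using flip_set_subset by blast
  also have "(\<Sum>\<delta>\<in>pos_off_J - flip_set \<beta>. coroot_pair \<delta> \<beta>) = 0"
  proof -
    have "(\<Sum>\<delta>\<in>pos_off_J - flip_set \<beta>. coroot_pair (refl \<beta> \<delta>) \<beta>) =
        (\<Sum>\<delta>\<in>pos_off_J - flip_set \<beta>. coroot_pair \<delta> \<beta>)"
      by (rule sum.reindex_bij_betw[OF bij_refl_outside_flip_set[OF b]])
    moreover have "(\<Sum>\<delta>\<in>pos_off_J - flip_set \<beta>. coroot_pair (refl \<beta> \<delta>) \<beta>) =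
        - (\<Sum>\<delta>\<in>pos_off_J - flip_set \<beta>. coroot_pair \<delta> \<beta>)"
      using coroot_pair_refl_self[OF pos_off_J_nonzero[OF b]] by (simp add: sum_negf)
    ultimately show ?thesis by simp
  qed
  finally show ?thesis by simp
qed

definition flip_change :: "('a \<Rightarrow> 'a) \<Rightarrow> 'a \<Rightarrow> 'a \<Rightarrow> real" where
  "flip_change x \<beta> \<delta> = (if x (refl \<beta> \<delta>) \<notin> pos then 1 else 0) - (if x \<delta> \<notin> pos then 1 else 0)"

lemma par_length_refl_diff: assumes b: "\<beta> \<in> pos_off_J"
  shows "real (par_length (x \<circ> refl \<beta>)) - real (par_length x) = (\<Sum>\<delta>\<in>flip_set \<beta>. flip_change x \<beta> \<delta>)"
proof -
  let ?i1 = "\<lambda>\<delta>. if x (refl \<beta> \<delta>) \<notin> pos then 1 else (0::real)"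
  let ?i2 = "\<lambda>\<delta>. if x \<delta> \<notin> pos then 1 else (0::real)"
  have PA: "pos_off_J \<inter> flip_set \<beta> = flip_set \<beta>" using flip_set_subset by blast
  have n1: "real (par_length (x \<circ> refl \<beta>)) = (\<Sum>\<delta>\<in>flip_set \<beta>. ?i1 \<delta>) +
      (\<Sum>\<delta>\<in>pos_off_J - flip_set \<beta>. ?i1 \<delta>)"
    unfolding par_length_def
      using card_filter_eq_sum[OF finite_pos_off_J, of "\<lambda>\<delta>. x (refl \<beta> \<delta>) \<notin> pos"] sum.Int_Diff[OF
          finite_pos_off_J, of ?i1 "flip_set \<beta>"] PA
    by simp
  have n2: "real (par_length x) = (\<Sum>\<delta>\<in>flip_set \<beta>. ?i2 \<delta>) + (\<Sum>\<delta>\<in>pos_off_J - flip_set \<beta>. ?i2 \<delta>)"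
    unfolding par_length_def
      using card_filter_eq_sum[OF finite_pos_off_J, of "\<lambda>\<delta>. x \<delta> \<notin> pos"] sum.Int_Diff[OF
          finite_pos_off_J, of ?i2 "flip_set \<beta>"] PA
    by simp
  have "(\<Sum>\<delta>\<in>pos_off_J - flip_set \<beta>. ?i1 \<delta>) = (\<Sum>\<delta>\<in>pos_off_J - flip_set \<beta>. ?i2 \<delta>)"
    by (rule sum.reindex_bij_betw[OF bij_refl_outside_flip_set[OF b], of ?i2])
  then show ?thesis using n1 n2 unfolding flip_change_def by (simp add: sum_subtractf)
qed

lemma pos_not_nonneg_comb_minus: "v \<in> pos \<Longrightarrow> \<not> nonneg_comb (-v)"
  using nonneg_comb_antisym mem_pos_iff root_nonzero by blast

lemma weyl_apply_refl: assumes x: "x \<in> W"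
  shows "x (refl \<beta> \<delta>) = x \<delta> - coroot_pair \<delta> \<beta> *\<^sub>R x \<beta>"
  unfolding refl_def using orthogonal_transformation_diff[OF weyl_orthogonal[OF x]]
      orthogonal_transformation_scaleR[OF weyl_orthogonal[OF x]] by simp

lemma par_length_refl_diff_split: assumes x: "x \<in> W" and b: "\<beta> \<in> pos_off_J"
  shows "real (par_length (x \<circ> refl \<beta>)) - real (par_length x) + coroot_pair sum_pos_off_J \<beta> =
      flip_change x \<beta> \<beta> + coroot_pair \<beta> \<beta> +
          (\<Sum>\<delta>\<in>flip_set \<beta> - {\<beta>}. flip_change x \<beta> \<delta> + coroot_pair \<delta> \<beta>)"
proof -
  have "real (par_length (x \<circ> refl \<beta>)) - real (par_length x) + coroot_pair sum_pos_off_J \<beta> =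
      (\<Sum>\<delta>\<in>flip_set \<beta>. flip_change x \<beta> \<delta> + coroot_pair \<delta> \<beta>)"
    using par_length_refl_diff[OF b, of x] coroot_pair_sum_pos_off_J[OF b]
      by (simp add: sum.distrib)
  also have "\<dots> = flip_change x \<beta> \<beta> + coroot_pair \<beta> \<beta> + (\<Sum>\<delta>\<in>flip_set \<beta> - {\<beta>}. flip_change x \<beta> \<delta> +
      coroot_pair \<delta> \<beta>)"
    by (rule sum.remove[OF finite_flip_set flip_set_self[OF b]])
  finally show ?thesis .
qed

lemma flip_change_ge: "flip_change x \<beta> \<delta> \<ge> -1" by (simp add: flip_change_def)

text \<open>The two alternatives in the definition of \<open>qbg_edge\<close>, once the length of a floor is
  read as a parabolic length and \<open>2 * coroot_pair (\<rho> - \<rho>\<^sub>J) \<beta>\<close> as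
  \<open>coroot_pair sum_pos_off_J \<beta>\<close> (lemma \<open>qbg_edge_iff_step\<close>).\<close>

definition bruhat_step :: "('a \<Rightarrow> 'a) \<Rightarrow> 'a \<Rightarrow> bool" where
  "bruhat_step x \<beta> \<longleftrightarrow> par_length (x \<circ> refl \<beta>) = par_length x + 1"

definition quantum_step :: "('a \<Rightarrow> 'a) \<Rightarrow> 'a \<Rightarrow> bool" where
  "quantum_step x \<beta> \<longleftrightarrow>
     real (par_length (x \<circ> refl \<beta>)) - real (par_length x) + coroot_pair sum_pos_off_J \<beta> = 1"

lemma quantum_step_flip_set: assumes x: "x \<in> W" and b: "\<beta> \<in> pos_off_J"
  and q: "quantum_step x \<beta>" and d: "\<delta> \<in> flip_set \<beta>"
  shows "x \<delta> \<notin> pos \<and> x (refl \<beta> \<delta>) \<in> pos \<and> (\<delta> \<noteq> \<beta> \<longrightarrow> coroot_pair \<delta> \<beta> = 1)"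
proof -
  have eq: "real (par_length (x \<circ> refl \<beta>)) - real (par_length x) + coroot_pair sum_pos_off_J \<beta> = 1"
    using q by (simp add: quantum_step_def)
  let ?g = "\<lambda>\<delta>. flip_change x \<beta> \<delta> + coroot_pair \<delta> \<beta>"
  have nn: "\<And>\<delta>. \<delta> \<in> flip_set \<beta> - {\<beta>} \<Longrightarrow> 0 \<le> ?g \<delta>"
    using flip_set_coroot_pair[OF b] flip_change_ge by (smt (verit) DiffD1)
  have s0: "(\<Sum>\<delta>\<in>flip_set \<beta> - {\<beta>}. ?g \<delta>) \<ge> 0" using nn by (intro sum_nonneg) simp
  have c2: "coroot_pair \<beta> \<beta> = 2" using coroot_pair_self[OF pos_off_J_nonzero[OF b]] .
  have gb: "flip_change x \<beta> \<beta> = -1"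
    using par_length_refl_diff_split[OF x b] eq s0 c2 flip_change_ge[of x \<beta> \<beta>] by simp
  have s1: "(\<Sum>\<delta>\<in>flip_set \<beta> - {\<beta>}. ?g \<delta>) = 0" using par_length_refl_diff_split[OF x b] eq c2 gb
    by simp
  show ?thesis
  proof (cases "\<delta> = \<beta>")
    case True
    then show ?thesis using gb by (simp add: flip_change_def split: if_splits)
  next
    case False
    then have dA: "\<delta> \<in> flip_set \<beta> - {\<beta>}" using d by blast
    have "?g \<delta> = 0" using sum_nonneg_0[OF _ nn s1 dA] finite_flip_set by simp
    moreover have "coroot_pair \<delta> \<beta> \<ge> 1" using flip_set_coroot_pair[OF b d] .
    ultimately show ?thesis using False flip_change_ge[of x \<beta> \<delta>]
      by (simp add: flip_change_def split: if_splits)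
  qed
qed

lemma par_length_refl_increase: assumes x: "x \<in> W" and b: "\<beta> \<in> pos_off_J" and xb: "x \<beta> \<in> pos"
  shows "par_length x + 1 \<le> par_length (x \<circ> refl \<beta>)"
proof -
  have fb: "flip_change x \<beta> \<beta> = 1"
  proof -
    have "x (refl \<beta> \<beta>) = - x \<beta>"
      using refl_self[OF pos_off_J_nonzero[OF b]] orthogonal_transformation_minus[OF
          weyl_orthogonal[OF x]] by simp
    then have "x (refl \<beta> \<beta>) \<notin> pos" using pos_minus_not_pos[OF xb] by simp
    then show ?thesis using xb by (simp add: flip_change_def)
  qed
  have nn: "\<And>\<delta>. \<delta> \<in> flip_set \<beta> - {\<beta>} \<Longrightarrow> 0 \<le> flip_change x \<beta> \<delta>"
  proof -
    fix \<delta> assume "\<delta> \<in> flip_set \<beta> - {\<beta>}"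
    then have d: "\<delta> \<in> flip_set \<beta>" by blast
    then have dP: "\<delta> \<in> pos_off_J" using flip_set_subset by blast
    show "0 \<le> flip_change x \<beta> \<delta>"
    proof (cases "x \<delta> \<in> pos")
      case True then show ?thesis by (simp add: flip_change_def)
    next
      case False
      obtain t where t: "coroot_pair \<delta> \<beta> = of_int t"
        using coroot_pair_int[OF pos_off_J_root[OF b] pos_off_J_root[OF dP]] by blast
      have t1: "0 \<le> t" using flip_set_coroot_pair[OF b d] t by simp
      have xdR: "x \<delta> \<in> R" using weyl_root[OF x pos_off_J_root[OF dP]] .
      have "nonneg_comb (- x \<delta>)" using not_pos_iff_nonneg_comb_minus[OF xdR] False by blast
      moreover have "nonneg_comb (of_int t *\<^sub>R x \<beta>)" using nonneg_comb_scale[OF _ t1] xb mem_pos_iff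
        by blast
      ultimately have "nonneg_comb (- x \<delta> + of_int t *\<^sub>R x \<beta>)" by (rule nonneg_comb_add)
      moreover have "- x (refl \<beta> \<delta>) = - x \<delta> + of_int t *\<^sub>R x \<beta>" using weyl_apply_refl[OF x] t
        by simp
      ultimately have "x (refl \<beta> \<delta>) \<notin> pos" using pos_not_nonneg_comb_minus by metis
      then show ?thesis by (simp add: flip_change_def)
    qed
  qed
  have "real (par_length (x \<circ> refl \<beta>)) - real (par_length x) = flip_change x \<beta> \<beta> +
      (\<Sum>\<delta>\<in>flip_set \<beta> - {\<beta>}. flip_change x \<beta> \<delta>)"
    using par_length_refl_diff[OF b, of x] sum.remove[OF finite_flip_set flip_set_self[OF b], of
        "flip_change x \<beta>"] by simp
  moreover have "(\<Sum>\<delta>\<in>flip_set \<beta> - {\<beta>}. flip_change x \<beta> \<delta>) \<ge> 0" using nn by (intro sum_nonneg) simp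
  ultimately show ?thesis using fb by simp
qed

lemma coroot_pair_sum_pos_off_J_ge2: assumes b: "\<beta> \<in> pos_off_J"
  shows "2 \<le> coroot_pair sum_pos_off_J \<beta>"
proof -
  have "coroot_pair sum_pos_off_J \<beta> = coroot_pair \<beta> \<beta> + (\<Sum>\<delta>\<in>flip_set \<beta> - {\<beta>}. coroot_pair \<delta> \<beta>)"
    using coroot_pair_sum_pos_off_J[OF b] sum.remove[OF finite_flip_set flip_set_self[OF b]] by simp
  moreover have "(\<Sum>\<delta>\<in>flip_set \<beta> - {\<beta>}. coroot_pair \<delta> \<beta>) \<ge> 0"
    using flip_set_coroot_pair[OF b] by (intro sum_nonneg) (smt (verit) DiffD1)
  ultimately show ?thesis using coroot_pair_self[OF pos_off_J_nonzero[OF b]] by simp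
qed

lemma coroot_pair_rho_diff: "2 * coroot_pair (rho R I0 \<alpha> - rho_J R I0 \<alpha> J) b =
    coroot_pair sum_pos_off_J b"
proof -
  have sub: "pos_roots_J R I0 \<alpha> J \<subseteq> pos" by (auto simp: pos_roots_J_def)
  have "rho R I0 \<alpha> - rho_J R I0 \<alpha> J = (1/2) *\<^sub>R ((\<Sum>b\<in>pos. b) - (\<Sum>b\<in>pos_roots_J R I0 \<alpha> J. b))"
    by (simp add: rho_def rho_J_def scaleR_diff_right)
  also have "(\<Sum>b\<in>pos. b) - (\<Sum>b\<in>pos_roots_J R I0 \<alpha> J. b) = (\<Sum>b\<in>pos - pos_roots_J R I0 \<alpha> J. b)"
    by (rule sum_diff[OF finite_pos sub, symmetric])
  also have "\<dots> = sum_pos_off_J" unfolding sum_pos_off_J_def pos_off_J_eq ..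
  finally show ?thesis by (simp add: coroot_pair_scaleR)
qed

lemma WJ_fixes_sum_pos_off_J: assumes z: "z \<in> WJ" shows "z sum_pos_off_J = sum_pos_off_J"
proof -
  have "z sum_pos_off_J = (\<Sum>\<delta>\<in>pos_off_J. z \<delta>)" unfolding sum_pos_off_J_def
    by (rule orthogonal_transformation_sum[OF weyl_orthogonal[OF weyl_J_weyl[OF z]]])
  also have "\<dots> = (\<Sum>\<delta>\<in>z ` pos_off_J. \<delta>)"
    using sum.reindex[of z pos_off_J "\<lambda>x. x"] orthogonal_transformation_inj[OF weyl_orthogonal[OF
        weyl_J_weyl[OF z]]] by (simp add: inj_on_def inj_def)
  also have "z ` pos_off_J = pos_off_J" by (rule WJ_image_pos_off_J[OF z])
  finally show ?thesis unfolding sum_pos_off_J_def .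
qed

lemma qbg_edge_iff_step:
  assumes w: "w \<in> min_reps \<alpha> I0 J"
  shows "qbg_edge R I0 \<alpha> J w \<beta> (wfloor \<alpha> I0 J (w \<circ> refl \<beta>))
    \<longleftrightarrow> \<beta> \<in> pos_off_J \<and> (bruhat_step w \<beta> \<or> quantum_step w \<beta>)"
proof -
  have wW: "w \<in> W" using w by (simp add: min_reps_def)
  have lw: "wlen \<alpha> I0 w = par_length w" using wlen_wfloor[OF wW] wfloor_min_reps[OF w] by simp
  have "wlen \<alpha> I0 (wfloor \<alpha> I0 J (w \<circ> refl \<beta>)) = par_length (w \<circ> refl \<beta>)" if "\<beta> \<in> pos_off_J"
    using wlen_wfloor[OF weyl_sub_comp[OF wW refl_in_weyl[OF pos_off_J_root[OF that]]]] .
  then show ?thesis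
    unfolding qbg_edge_def bruhat_step_def quantum_step_def pos_off_J_eq[symmetric]
    using w lw coroot_pair_rho_diff[of \<beta>] by auto
qed

lemma bruhat_step_pos:
  assumes x: "x \<in> W" and b: "\<beta> \<in> pos_off_J" and step: "bruhat_step x \<beta>"
  shows "x \<beta> \<in> pos"
proof (rule ccontr)
  assume "x \<beta> \<notin> pos"
  moreover have "(x \<circ> refl \<beta>) \<beta> = - x \<beta>"
    using refl_self[OF pos_off_J_nonzero[OF b]] orthogonal_transformation_minus[OF
        weyl_orthogonal[OF x]]
    by simp
  ultimately have "(x \<circ> refl \<beta>) \<beta> \<in> pos"
    using not_pos_iff_minus_pos[OF weyl_root[OF x pos_off_J_root[OF b]]] by simp
  then have "par_length (x \<circ> refl \<beta>) + 1 \<le> par_length ((x \<circ> refl \<beta>) \<circ> refl \<beta>)"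
    using par_length_refl_increase[OF weyl_sub_comp[OF x refl_in_weyl[OF pos_off_J_root[OF b]]] b]
    by blast
  moreover have "(x \<circ> refl \<beta>) \<circ> refl \<beta> = x"
    using refl_refl[OF pos_off_J_nonzero[OF b]] by (simp add: fun_eq_iff)
  ultimately show False using step by (simp add: bruhat_step_def)
qed

lemma quantum_step_not_pos:
  assumes x: "x \<in> W" and b: "\<beta> \<in> pos_off_J" and step: "quantum_step x \<beta>"
  shows "x \<beta> \<notin> pos"
proof
  assume "x \<beta> \<in> pos"
  then have "par_length x + 1 \<le> par_length (x \<circ> refl \<beta>)" using par_length_refl_increase[OF x b]
    by blast
  then show False using step coroot_pair_sum_pos_off_J_ge2[OF b] by (simp add: quantum_step_def)
qed

lemma weyl_comp_refl: "z \<in> W \<Longrightarrow> z \<circ> refl \<beta> = refl (z \<beta>) \<circ> z"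
  by (rule ext) (simp add: orthogonal_transformation_refl_conj[OF weyl_orthogonal])

lemma wfloor_comp_WJ_refl:
  assumes u: "u \<in> W" and z: "z \<in> WJ" and b: "\<beta> \<in> R"
  shows "wfloor \<alpha> I0 J (u \<circ> z \<circ> refl \<beta>) = wfloor \<alpha> I0 J (u \<circ> refl (z \<beta>))"
    and "par_length (u \<circ> z \<circ> refl \<beta>) = par_length (u \<circ> refl (z \<beta>))"
proof -
  have eq: "u \<circ> z \<circ> refl \<beta> = (u \<circ> refl (z \<beta>)) \<circ> z"
    using weyl_comp_refl[OF weyl_J_weyl[OF z]] by (simp add: comp_assoc)
  have "u \<circ> refl (z \<beta>) \<in> W"
    using weyl_sub_comp[OF u refl_in_weyl[OF weyl_root[OF weyl_J_weyl[OF z] b]]] .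
  then show "wfloor \<alpha> I0 J (u \<circ> z \<circ> refl \<beta>) = wfloor \<alpha> I0 J (u \<circ> refl (z \<beta>))"
    and "par_length (u \<circ> z \<circ> refl \<beta>) = par_length (u \<circ> refl (z \<beta>))"
    using wfloor_comp_WJ[OF _ z] par_length_comp_WJ[OF z] eq by simp_all
qed

end

section \<open>The highest root\<close>

locale highest_root_system = parabolic_root_system R I0 \<alpha> \<Lambda> m J for R :: "'a::euclidean_space set"
  and I0 :: "'i set" and \<alpha> \<Lambda> m J +
  fixes \<theta> :: 'a
  assumes hr: "highest_root R I0 \<alpha> \<theta>"
begin

lemma theta_root: "\<theta> \<in> R" using hr by (simp add: highest_root_def)

lemma theta_dominates: "b \<in> R \<Longrightarrow> nonneg_comb (\<theta> - b)" using hr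
  by (auto simp: highest_root_def nonneg_comb_def)

lemma theta_nonzero: "\<theta> \<noteq> 0" using root_nonzero theta_root by blast

lemma theta_pos: "\<theta> \<in> pos"
proof (rule ccontr)
  assume "\<theta> \<notin> pos"
  then have mp: "-\<theta> \<in> pos" using not_pos_iff_minus_pos theta_root by blast
  have g1: "nonneg_comb (\<theta> - (-\<theta>))" using theta_dominates[OF minus_root[OF theta_root]] .
  have "nonneg_comb (of_int 2 *\<^sub>R (-\<theta>))" using nonneg_comb_scale[of "-\<theta>" 2] mp mem_pos_iff by simp
  moreover have "of_int 2 *\<^sub>R (-\<theta>) = - (\<theta> - (-\<theta>))" by (simp add: scaleR_2)
  ultimately have "\<theta> - (-\<theta>) = 0" using nonneg_comb_antisym g1 by metis
  then show False using theta_nonzero by (simp add: scaleR_2[symmetric])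
qed

lemma theta_inner_simple_nonneg: assumes i: "i \<in> I0" shows "0 \<le> \<theta> \<bullet> \<alpha> i"
proof (rule ccontr)
  assume "\<not> 0 \<le> \<theta> \<bullet> \<alpha> i"
  then have neg: "\<theta> \<bullet> \<alpha> i < 0" by simp
  obtain t where t: "coroot_pair \<theta> (\<alpha> i) = of_int t"
    using coroot_pair_int[OF simple_root[OF i] theta_root] by blast
  have "coroot_pair \<theta> (\<alpha> i) < 0" using coroot_pair_sign[OF simple_nonzero[OF i]] neg by blast
  then have tn: "t < 0" using t by simp
  have bR: "refl (\<alpha> i) \<theta> \<in> R" using refl_root[OF simple_root[OF i] theta_root] .
  have eq: "\<theta> - refl (\<alpha> i) \<theta> = of_int t *\<^sub>R \<alpha> i" by (simp add: refl_def t)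
  have g1: "nonneg_comb (of_int t *\<^sub>R \<alpha> i)" using theta_dominates[OF bR] eq by simp
  have "nonneg_comb (of_int (-t) *\<^sub>R \<alpha> i)"
    using nonneg_comb_scale[of "\<alpha> i" "-t"] simple_pos[OF i] mem_pos_iff tn by simp
  then have "nonneg_comb (- (of_int t *\<^sub>R \<alpha> i))" by simp
  then have "of_int t *\<^sub>R \<alpha> i = 0" using nonneg_comb_antisym g1 by blast
  then show False using tn simple_nonzero[OF i] by simp
qed

lemma nonneg_comb_inner_theta: assumes "nonneg_comb v" shows "0 \<le> v \<bullet> \<theta>"
proof -
  obtain c where c: "\<forall>i\<in>I0. 0 \<le> c i" "v = rcomb I0 \<alpha> c" using assms nonneg_comb_def by blast
  have "v \<bullet> \<theta> = \<theta> \<bullet> rcomb I0 \<alpha> c" using c(2) by (simp add: inner_commute)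
  also have "\<dots> = (\<Sum>i\<in>I0. of_int (c i) * (\<theta> \<bullet> \<alpha> i))"
    unfolding rcomb_def by (simp add: inner_sum_right)
  finally have "v \<bullet> \<theta> = (\<Sum>i\<in>I0. of_int (c i) * (\<theta> \<bullet> \<alpha> i))" .
  also have "\<dots> \<ge> 0" using c(1) theta_inner_simple_nonneg by (intro sum_nonneg) simp
  finally show ?thesis .
qed

lemma pos_inner_theta: "\<eta> \<in> pos \<Longrightarrow> 0 \<le> \<eta> \<bullet> \<theta>" using nonneg_comb_inner_theta mem_pos_iff by blast

lemma theta_pos_root: "\<eta> \<in> R \<Longrightarrow> 0 < \<eta> \<bullet> \<theta> \<Longrightarrow> \<eta> \<in> pos"
proof (rule ccontr)
  assume "\<eta> \<in> R" "0 < \<eta> \<bullet> \<theta>" "\<eta> \<notin> pos"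
  then have "-\<eta> \<in> pos" using not_pos_iff_minus_pos by blast
  then have "0 \<le> (-\<eta>) \<bullet> \<theta>" by (rule pos_inner_theta)
  then show False using \<open>0 < \<eta> \<bullet> \<theta>\<close> by simp
qed

lemma theta_neg_root: "\<eta> \<in> R \<Longrightarrow> \<eta> \<bullet> \<theta> < 0 \<Longrightarrow> \<eta> \<notin> pos"
  using pos_inner_theta by fastforce

lemma coroot_pair_theta_ge2: assumes e: "\<eta> \<in> R" and k: "coroot_pair \<eta> \<theta> = of_int k" "2 \<le> k"
  shows "\<eta> = \<theta>"
proof -
  have r: "refl \<theta> \<eta> = \<eta> - of_int k *\<^sub>R \<theta>" by (simp add: refl_def k)
  have "- refl \<theta> \<eta> \<in> R" using minus_root[OF refl_root[OF theta_root e]] .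
  then have g1: "nonneg_comb (\<theta> - (- refl \<theta> \<eta>))" by (rule theta_dominates)
  have g2: "nonneg_comb (\<theta> - \<eta>)" using theta_dominates[OF e] .
  have "nonneg_comb ((\<theta> - \<eta>) + (\<theta> - (- refl \<theta> \<eta>)))" using nonneg_comb_add[OF g2 g1] .
  moreover have "(\<theta> - \<eta>) + (\<theta> - (- refl \<theta> \<eta>)) = of_int (2 - k) *\<^sub>R \<theta>"
    using r by (simp add: algebra_simps scaleR_2)
  ultimately have g3: "nonneg_comb (of_int (2 - k) *\<^sub>R \<theta>)" by simp
  show ?thesis
  proof (cases "k = 2")
    case True
    have "\<theta> - (- refl \<theta> \<eta>) = - (\<theta> - \<eta>)" using r True by (simp add: algebra_simps scaleR_2)
    then have "\<theta> - \<eta> = 0" using nonneg_comb_antisym g1 g2 by metis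
    then show ?thesis by simp
  next
    case False
    then have k3: "0 \<le> k - 2" using k by simp
    have "nonneg_comb (of_int (k - 2) *\<^sub>R \<theta>)" using nonneg_comb_scale[OF _ k3] theta_pos mem_pos_iff
      by blast
    moreover have "of_int (2 - k) *\<^sub>R \<theta> = - (of_int (k - 2) *\<^sub>R \<theta>)" by (simp add: algebra_simps)
    ultimately have "of_int (k - 2) *\<^sub>R \<theta> = 0" using nonneg_comb_antisym g3 by metis
    then show ?thesis using False theta_nonzero by simp
  qed
qed

lemma coroot_pair_theta_cases: assumes e: "\<eta> \<in> R" "\<eta> \<noteq> \<theta>" "\<eta> \<noteq> - \<theta>"
  shows "coroot_pair \<eta> \<theta> = -1 \<or> coroot_pair \<eta> \<theta> = 0 \<or> coroot_pair \<eta> \<theta> = 1"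
proof -
  obtain k where k: "coroot_pair \<eta> \<theta> = of_int k" using coroot_pair_int[OF theta_root e(1)] by blast
  have "\<not> 2 \<le> k" using coroot_pair_theta_ge2[OF e(1) k] e(2) by blast
  moreover have "\<not> k \<le> -2"
  proof
    assume "k \<le> -2"
    have c: "coroot_pair (-\<eta>) \<theta> = of_int (-k)" using k by (simp add: coroot_pair_minus_left)
    have "2 \<le> -k" using \<open>k \<le> -2\<close> by simp
    then have "-\<eta> = \<theta>" using coroot_pair_theta_ge2[OF minus_root[OF e(1)] c] by simp
    then have "\<eta> = - \<theta>" by (metis minus_minus)
    then show False using e(3) by blast
  qed
  ultimately have "k = -1 \<or> k = 0 \<or> k = 1" by auto
  then show ?thesis using k by auto
qed

lemma refl_theta_inner: "refl \<theta> \<eta> \<bullet> \<theta> = - (\<eta> \<bullet> \<theta>)"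
  using refl_adjoint[OF theta_nonzero, of \<eta> \<theta>] refl_self[OF theta_nonzero] by simp

lemma refl_theta_weyl: "refl \<theta> \<in> W" using refl_in_weyl[OF theta_root] .

definition theta_pos_count :: "('a \<Rightarrow> 'a) \<Rightarrow> nat"
  where "theta_pos_count y = card {\<delta>\<in>pos_off_J. 0 < y \<delta> \<bullet> \<theta>}"

definition theta_neg_count :: "('a \<Rightarrow> 'a) \<Rightarrow> nat"
  where "theta_neg_count y = card {\<delta>\<in>pos_off_J. y \<delta> \<bullet> \<theta> < 0}"

lemma refl_theta_not_pos_iff:
  assumes e: "\<eta> \<in> R"
  shows "refl \<theta> \<eta> \<notin> pos \<longleftrightarrow> (\<eta> \<notin> pos \<and> \<eta> \<bullet> \<theta> = 0) \<or> 0 < \<eta> \<bullet> \<theta>"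
proof (cases "\<eta> \<bullet> \<theta>" "0::real" rule: linorder_cases)
  case less
  then have "0 < refl \<theta> \<eta> \<bullet> \<theta>" using refl_theta_inner[of \<eta>] by simp
  then show ?thesis using theta_pos_root[OF refl_root[OF theta_root e]] less by auto
next
  case equal
  then have "refl \<theta> \<eta> = \<eta>" by (simp add: refl_def coroot_pair_def)
  then show ?thesis using equal by simp
next
  case greater
  then have "refl \<theta> \<eta> \<bullet> \<theta> < 0" using refl_theta_inner[of \<eta>] by simp
  then show ?thesis using theta_neg_root[OF refl_root[OF theta_root e]] greater by auto
qed

lemma not_pos_iff_theta:
  "\<eta> \<in> R \<Longrightarrow> \<eta> \<notin> pos \<longleftrightarrow> (\<eta> \<notin> pos \<and> \<eta> \<bullet> \<theta> = 0) \<or> \<eta> \<bullet> \<theta> < 0"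
  using theta_pos_root theta_neg_root by force

lemma par_length_refl_theta:
  assumes y: "y \<in> W"
  shows "par_length (refl \<theta> \<circ> y) + theta_neg_count y = par_length y + theta_pos_count y"
proof -
  let ?Z = "{\<delta>\<in>pos_off_J. y \<delta> \<notin> pos \<and> y \<delta> \<bullet> \<theta> = 0}"
  let ?P = "{\<delta>\<in>pos_off_J. 0 < y \<delta> \<bullet> \<theta>}"
  let ?N = "{\<delta>\<in>pos_off_J. y \<delta> \<bullet> \<theta> < 0}"
  have yR: "\<And>\<delta>. \<delta> \<in> pos_off_J \<Longrightarrow> y \<delta> \<in> R" using weyl_root[OF y] pos_off_J_root by blast
  have "{\<delta>\<in>pos_off_J. (refl \<theta> \<circ> y) \<delta> \<notin> pos} = ?Z \<union> ?P"
    using refl_theta_not_pos_iff[OF yR] by auto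
  moreover have "{\<delta>\<in>pos_off_J. y \<delta> \<notin> pos} = ?Z \<union> ?N"
    using not_pos_iff_theta[OF yR] by auto
  moreover have "finite ?Z" "finite ?P" "finite ?N" using finite_pos_off_J by auto
  moreover have "?Z \<inter> ?P = {}" "?Z \<inter> ?N = {}" by auto
  ultimately have "par_length (refl \<theta> \<circ> y) = card ?Z + card ?P" "par_length y = card ?Z + card ?N"
    unfolding par_length_def by (simp_all add: card_Un_disjoint)
  then show ?thesis unfolding theta_pos_count_def theta_neg_count_def by simp
qed

definition hits :: "'a \<Rightarrow> ('a \<Rightarrow> 'a) \<Rightarrow> real"
  where "hits v y = (if \<exists>\<delta>\<in>pos_off_J. y \<delta> = v then 1 else 0)"

lemma sum_hits: assumes y: "y \<in> W" shows "(\<Sum>\<delta>\<in>pos_off_J. if y \<delta> = v then 1 else 0) = hits v y"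
proof (cases "\<exists>\<delta>\<in>pos_off_J. y \<delta> = v")
  case True
  then obtain \<delta>0 where d0: "\<delta>0 \<in> pos_off_J" "y \<delta>0 = v" by blast
  have "(\<Sum>\<delta>\<in>pos_off_J. if y \<delta> = v then 1 else (0::real)) = (\<Sum>\<delta>\<in>pos_off_J. if \<delta> = \<delta>0 then 1 else 0)"
  proof (rule sum.cong[OF refl])
    fix \<delta> assume "\<delta> \<in> pos_off_J"
    have "y \<delta> = v \<longleftrightarrow> \<delta> = \<delta>0" using d0(2) orthogonal_transformation_inj[OF weyl_orthogonal[OF y]]
      by (auto simp: inj_def)
    then show "(if y \<delta> = v then 1 else (0::real)) = (if \<delta> = \<delta>0 then 1 else 0)" by simp
  qed
  also have "\<dots> = 1" using d0(1) finite_pos_off_J by (simp add: sum.delta)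
  finally show ?thesis using True by (simp add: hits_def)
next
  case False then show ?thesis by (simp add: hits_def)
qed

lemma theta_sign_indicator:
  assumes e: "\<eta> \<in> R"
  shows "(if 0 < \<eta> \<bullet> \<theta> then 1 else 0) - (if \<eta> \<bullet> \<theta> < 0 then 1 else 0)
    = coroot_pair \<eta> \<theta> - (if \<eta> = \<theta> then 1 else 0) + (if \<eta> = - \<theta> then 1 else (0::real))"
proof -
  have "\<theta> \<bullet> \<theta> > 0" using theta_nonzero by simp
  then have tn: "\<theta> \<noteq> - \<theta>" by (metis inner_minus_right neg_0_less_iff_less not_less_iff_gr_or_eq)
  consider "\<eta> = \<theta>" | "\<eta> = - \<theta>" | "\<eta> \<noteq> \<theta> \<and> \<eta> \<noteq> - \<theta>" by blast
  then show ?thesis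
  proof cases
    case 1
    then show ?thesis using tn theta_nonzero coroot_pair_self[OF theta_nonzero]
      by (simp add: inner_ge_zero not_less)
  next
    case 2
    then show ?thesis
      using tn theta_nonzero coroot_pair_self[OF theta_nonzero]
      by (simp add: coroot_pair_minus_left inner_ge_zero not_less)
  next
    case 3
    have "(coroot_pair \<eta> \<theta> > 0 \<longleftrightarrow> \<eta> \<bullet> \<theta> > 0) \<and> (coroot_pair \<eta> \<theta> < 0 \<longleftrightarrow> \<eta> \<bullet> \<theta> < 0)"
      using coroot_pair_sign[OF theta_nonzero] by blast
    with coroot_pair_theta_cases[OF e] 3 show ?thesis by auto
  qed
qed

lemma par_length_refl_theta_diff:
  assumes y: "y \<in> W"
  shows "real (par_length (refl \<theta> \<circ> y)) - real (par_length y)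
    = coroot_pair (y sum_pos_off_J) \<theta> - hits \<theta> y + hits (- \<theta>) y"
proof -
  have yR: "\<And>\<delta>. \<delta> \<in> pos_off_J \<Longrightarrow> y \<delta> \<in> R" using weyl_root[OF y] pos_off_J_root by blast
  have "real (theta_pos_count y) - real (theta_neg_count y)
      = (\<Sum>\<delta>\<in>pos_off_J. (if 0 < y \<delta> \<bullet> \<theta> then 1 else 0) - (if y \<delta> \<bullet> \<theta> < 0 then 1 else (0::real)))"
    unfolding theta_pos_count_def theta_neg_count_def
    using card_filter_eq_sum[OF finite_pos_off_J] by (simp add: sum_subtractf)
  also have "\<dots> = (\<Sum>\<delta>\<in>pos_off_J. coroot_pair (y \<delta>) \<theta>)
      - (\<Sum>\<delta>\<in>pos_off_J. if y \<delta> = \<theta> then 1 else 0) + (\<Sum>\<delta>\<in>pos_off_J. if y \<delta> = - \<theta> then 1 else 0)"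
    using theta_sign_indicator[OF yR] by (simp add: sum.distrib sum_subtractf)
  also have "(\<Sum>\<delta>\<in>pos_off_J. coroot_pair (y \<delta>) \<theta>) = coroot_pair (y sum_pos_off_J) \<theta>"
    unfolding sum_pos_off_J_def orthogonal_transformation_sum[OF weyl_orthogonal[OF y]]
    by (rule coroot_pair_sum[symmetric])
  finally have "real (theta_pos_count y) - real (theta_neg_count y)
      = coroot_pair (y sum_pos_off_J) \<theta> - hits \<theta> y + hits (- \<theta>) y"
    using sum_hits[OF y] by simp
  moreover have "real (par_length (refl \<theta> \<circ> y) + theta_neg_count y) = real (par_length y +
      theta_pos_count y)"
    using par_length_refl_theta[OF y] by simp
  ultimately show ?thesis by simp
qed

lemma hits_theta:
  assumes y: "y \<in> W"
  shows "hits \<theta> y = (if 0 < y \<Lambda> \<bullet> \<theta> then 1 else 0)"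
    and "hits (- \<theta>) y = (if y \<Lambda> \<bullet> \<theta> < 0 then 1 else 0)"
proof -
  obtain \<gamma> where g: "\<gamma> \<in> R" "y \<gamma> = \<theta>" using weyl_root_surj[OF y theta_root] by blast
  have yo: "orthogonal_transformation y" using weyl_orthogonal[OF y] .
  have lam: "y \<Lambda> \<bullet> \<theta> = \<Lambda> \<bullet> \<gamma>" using orthogonal_transformation_inner[OF yo] g(2) by metis
  have "(\<exists>\<delta>\<in>pos_off_J. y \<delta> = \<theta>) \<longleftrightarrow> \<gamma> \<in> pos_off_J"
    using g orthogonal_transformation_inj[OF yo] by (auto simp: inj_def)
  then show "hits \<theta> y = (if 0 < y \<Lambda> \<bullet> \<theta> then 1 else 0)"
    unfolding hits_def lam using g(1) by (auto simp: pos_off_J_def)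
  have "y (- \<gamma>) = - \<theta>" using orthogonal_transformation_minus[OF yo] g(2) by simp
  then have "(\<exists>\<delta>\<in>pos_off_J. y \<delta> = - \<theta>) \<longleftrightarrow> - \<gamma> \<in> pos_off_J"
    using orthogonal_transformation_inj[OF yo] by (metis injD)
  then show "hits (- \<theta>) y = (if y \<Lambda> \<bullet> \<theta> < 0 then 1 else 0)"
    unfolding hits_def lam using minus_root[OF g(1)] by (auto simp: pos_off_J_def)
qed

section \<open>Translating edges by the reflection in the highest root\<close>

lemma alpha0_pair_pos_iff: "alpha0_pair \<theta> v > 0 \<longleftrightarrow> v \<bullet> \<theta> < 0"
  using coroot_pair_sign[OF theta_nonzero, of v] by (auto simp: alpha0_pair_def)

lemma alpha0_pair_neg_iff: "alpha0_pair \<theta> v < 0 \<longleftrightarrow> v \<bullet> \<theta> > 0"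
  using coroot_pair_sign[OF theta_nonzero, of v] by (auto simp: alpha0_pair_def)

lemma alpha0_pair_nonpos_iff: "alpha0_pair \<theta> v \<le> 0 \<longleftrightarrow> v \<bullet> \<theta> \<ge> 0"
  using alpha0_pair_pos_iff[of v] by linarith

lemma alpha0_pair_nonneg_iff: "alpha0_pair \<theta> v \<ge> 0 \<longleftrightarrow> v \<bullet> \<theta> \<le> 0"
  using alpha0_pair_neg_iff[of v] by linarith

lemma coroot_pair_theta_neg:
  assumes e: "\<eta> \<in> R" "\<eta> \<noteq> - \<theta>" and s: "\<eta> \<bullet> \<theta> < 0"
  shows "coroot_pair \<eta> \<theta> = -1"
proof -
  have "\<eta> \<noteq> \<theta>" using s by (metis inner_ge_zero not_le)
  moreover have "coroot_pair \<eta> \<theta> < 0" using coroot_pair_sign[OF theta_nonzero] s by blast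
  ultimately show ?thesis using coroot_pair_theta_cases[OF e(1) _ e(2)] by auto
qed

lemma refl_theta_preimage_pos:
  assumes w: "w \<in> W" and b: "\<beta> \<in> R" and g: "\<gamma> \<in> R" "w \<gamma> = \<theta>"
    and c: "coroot_pair (w \<beta>) \<theta> = -1" and h: "coroot_pair \<gamma> \<beta> = -1"
  shows "w (refl \<beta> \<gamma>) \<in> pos"
proof -
  have "w (refl \<beta> \<gamma>) = \<theta> + w \<beta>" using weyl_apply_refl[OF w] g(2) h by simp
  moreover have "coroot_pair (\<theta> + w \<beta>) \<theta> = 1"
    using c coroot_pair_self[OF theta_nonzero] by (simp add: coroot_pair_add)
  then have "0 < (\<theta> + w \<beta>) \<bullet> \<theta>" using coroot_pair_sign[OF theta_nonzero] by (metis zero_less_one)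
  ultimately show ?thesis using theta_pos_root weyl_root[OF w refl_root[OF b g(1)]] by metis
qed

text \<open>If \<open>\<gamma>\<close> crossed from the closed negative side of \<open>\<Lambda>\<close> to the non-negative side, the
  crossing root (\<open>-\<gamma>\<close> or \<open>s\<^sub>\<beta> \<gamma>\<close>) would lie in the flip set; along a quantum step it then
  pairs to \<open>1\<close> with \<open>\<beta>\<^sup>\<or>\<close>, which makes \<open>w (s\<^sub>\<beta> \<gamma>) = \<theta> + w \<beta>\<close> positive, contrary to
  \<open>quantum_step_flip_set\<close>.\<close>

lemma quantum_step_refl_sign:
  assumes w: "w \<in> W" and b: "\<beta> \<in> pos_off_J" and qu: "quantum_step w \<beta>"
    and g: "\<gamma> \<in> R" "w \<gamma> = \<theta>" and s: "w \<beta> \<bullet> \<theta> < 0" and nm: "w \<beta> \<noteq> - \<theta>"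
    and p: "\<Lambda> \<bullet> \<gamma> \<le> 0"
  shows "\<Lambda> \<bullet> refl \<beta> \<gamma> < 0"
proof -
  have bR: "\<beta> \<in> R" and bnz: "\<beta> \<noteq> 0" using pos_off_J_root[OF b] pos_off_J_nonzero[OF b] .
  have wo: "orthogonal_transformation w" using weyl_orthogonal[OF w] .
  have wbR: "w \<beta> \<in> R" using weyl_root[OF w bR] .
  have claim: "coroot_pair \<gamma> \<beta> = -1 \<Longrightarrow> w (refl \<beta> \<gamma>) \<in> pos"
    using refl_theta_preimage_pos[OF w bR g coroot_pair_theta_neg[OF wbR nm s]] .
  have rneg: "refl \<beta> (- \<gamma>) = - refl \<beta> \<gamma>" by (simp add: refl_def coroot_pair_minus_left)
  show ?thesis
  proof (cases "\<Lambda> \<bullet> \<gamma> < 0")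
    case True
    show ?thesis
    proof (rule ccontr)
      assume "\<not> \<Lambda> \<bullet> refl \<beta> \<gamma> < 0"
      then have "- \<gamma> \<in> flip_set \<beta>"
        using True minus_root[OF g(1)] rneg by (simp add: flip_set_def pos_off_J_def)
      moreover have "- \<gamma> \<noteq> \<beta>" using nm g(2) orthogonal_transformation_minus[OF wo] by force
      ultimately have Q: "w (- \<gamma>) \<notin> pos \<and> w (refl \<beta> (- \<gamma>)) \<in> pos \<and> coroot_pair (- \<gamma>) \<beta> = 1"
        using quantum_step_flip_set[OF w b qu] by blast
      then have "w (refl \<beta> \<gamma>) \<in> pos" using claim by (simp add: coroot_pair_minus_left)
      moreover have "w (refl \<beta> (- \<gamma>)) = - w (refl \<beta> \<gamma>)"
        using rneg orthogonal_transformation_minus[OF wo] by simp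
      ultimately show False using Q pos_minus_not_pos by metis
    qed
  next
    case False
    then have p0: "\<Lambda> \<bullet> \<gamma> = 0" using p by simp
    have "\<theta> \<bullet> w \<beta> < 0" using s by (simp add: inner_commute)
    then have "coroot_pair \<gamma> \<beta> < 0"
      using orthogonal_transformation_coroot_pair[OF wo, of \<gamma> \<beta>] g(2)
        coroot_pair_sign[OF root_nonzero[OF wbR]] by metis
    then have "0 < \<Lambda> \<bullet> refl \<beta> \<gamma>"
      using inner_Lambda_refl[of \<beta> \<gamma>] p0 pos_off_J_inner_Lambda[OF b] by (simp add: mult_neg_pos)
    moreover have rr: "refl \<beta> (refl \<beta> \<gamma>) = \<gamma>" using refl_refl[OF bnz] .
    ultimately have "refl \<beta> \<gamma> \<in> flip_set \<beta>"
      using p0 refl_root[OF bR g(1)] by (simp add: flip_set_def pos_off_J_def)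
    moreover have "refl \<beta> \<gamma> \<noteq> \<beta>"
    proof
      assume "refl \<beta> \<gamma> = \<beta>"
      then have "\<gamma> = - \<beta>" using rr refl_self[OF bnz] by metis
      then show False using nm g(2) orthogonal_transformation_minus[OF wo] by (metis minus_minus)
    qed
    ultimately have Q: "w (refl \<beta> \<gamma>) \<notin> pos \<and> coroot_pair (refl \<beta> \<gamma>) \<beta> = 1"
      using quantum_step_flip_set[OF w b qu] by blast
    then have "coroot_pair \<gamma> \<beta> = -1" using coroot_pair_refl_self[OF bnz] by simp
    then show ?thesis using claim Q by blast
  qed
qed

lemma par_length_refl_theta_comp_refl:
  assumes w: "w \<in> W" and b: "\<beta> \<in> pos_off_J"
    and sg: "(w \<Lambda> \<bullet> \<theta> < 0 \<and> (w \<circ> refl \<beta>) \<Lambda> \<bullet> \<theta> < 0) \<or> (0 < w \<Lambda> \<bullet> \<theta> \<and> 0 < (w \<circ> refl \<beta>) \<Lambda> \<bullet> \<theta>)"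
  shows "real (par_length (refl \<theta> \<circ> w \<circ> refl \<beta>)) - real (par_length (refl \<theta> \<circ> w))
    = real (par_length (w \<circ> refl \<beta>)) - real (par_length w)
      - coroot_pair sum_pos_off_J \<beta> * coroot_pair (w \<beta>) \<theta>"
proof -
  have wbW: "w \<circ> refl \<beta> \<in> W" using weyl_sub_comp[OF w refl_in_weyl[OF pos_off_J_root[OF b]]] .
  have "hits \<theta> (w \<circ> refl \<beta>) = hits \<theta> w" "hits (- \<theta>) (w \<circ> refl \<beta>) = hits (- \<theta>) w"
    using hits_theta[OF w] hits_theta[OF wbW] sg by auto
  moreover have "coroot_pair ((w \<circ> refl \<beta>) sum_pos_off_J) \<theta>
      = coroot_pair (w sum_pos_off_J) \<theta> - coroot_pair sum_pos_off_J \<beta> * coroot_pair (w \<beta>) \<theta>"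
    using weyl_apply_refl[OF w, of \<beta> sum_pos_off_J]
      by (simp add: coroot_pair_diff coroot_pair_scaleR)
  ultimately show ?thesis
    using par_length_refl_theta_diff[OF w] par_length_refl_theta_diff[OF wbW]
      by (simp add: comp_assoc)
qed

lemma step_coroot_pair_theta:
  assumes w: "w \<in> W" and b: "\<beta> \<in> pos_off_J" and nt: "w \<beta> \<noteq> \<theta>" and nm: "w \<beta> \<noteq> - \<theta>"
  shows "bruhat_step w \<beta> \<Longrightarrow> coroot_pair (w \<beta>) \<theta> = 0 \<or> coroot_pair (w \<beta>) \<theta> = 1"
    and "quantum_step w \<beta> \<Longrightarrow> coroot_pair (w \<beta>) \<theta> = 0 \<or> coroot_pair (w \<beta>) \<theta> = -1"
proof -
  have wbR: "w \<beta> \<in> R" using weyl_root[OF w pos_off_J_root[OF b]] .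
  have cases: "coroot_pair (w \<beta>) \<theta> \<in> {-1, 0, 1}" using coroot_pair_theta_cases[OF wbR nt nm] by auto
  have sign: "0 \<le> coroot_pair (w \<beta>) \<theta> \<longleftrightarrow> 0 \<le> w \<beta> \<bullet> \<theta>"
    using coroot_pair_sign[OF theta_nonzero, of "w \<beta>"] by linarith
  show "coroot_pair (w \<beta>) \<theta> = 0 \<or> coroot_pair (w \<beta>) \<theta> = 1" if "bruhat_step w \<beta>"
    using pos_inner_theta[OF bruhat_step_pos[OF w b that]] sign cases by auto
  show "coroot_pair (w \<beta>) \<theta> = 0 \<or> coroot_pair (w \<beta>) \<theta> = -1" if "quantum_step w \<beta>"
  proof -
    have "- w \<beta> \<in> pos"
      using quantum_step_not_pos[OF w b that] not_pos_iff_minus_pos[OF wbR] by blast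
    then have "w \<beta> \<bullet> \<theta> \<le> 0" using pos_inner_theta by fastforce
    then show ?thesis using coroot_pair_sign[OF theta_nonzero, of "w \<beta>"] cases by auto
  qed
qed

text \<open>Writing \<open>r\<^sub>\<theta> w = u z\<close> with \<open>u = \<lfloor>r\<^sub>\<theta> w\<rfloor>\<close>, we have \<open>r\<^sub>\<theta> w s\<^sub>\<beta> = u s\<^bsub>z \<beta>\<^esub> z\<close>, so the
  translated edge can be checked on \<open>u\<close> and \<open>z \<beta>\<close>, whose lengths are those of \<open>r\<^sub>\<theta> w\<close> and
  \<open>r\<^sub>\<theta> w s\<^sub>\<beta>\<close>.\<close>

lemma edge_refl_theta:
  assumes edge: "qbg_edge R I0 \<alpha> J w \<beta> (wfloor \<alpha> I0 J (w \<circ> refl \<beta>))"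
    and z: "z \<in> WJ" and zdec: "refl \<theta> \<circ> w = wfloor \<alpha> I0 J (refl \<theta> \<circ> w) \<circ> z"
    and nt: "w \<beta> \<noteq> \<theta>" and nm: "w \<beta> \<noteq> - \<theta>"
    and sg: "(w \<Lambda> \<bullet> \<theta> < 0 \<and> (w \<circ> refl \<beta>) \<Lambda> \<bullet> \<theta> < 0) \<or> (0 < w \<Lambda> \<bullet> \<theta> \<and> 0 < (w \<circ> refl \<beta>) \<Lambda> \<bullet> \<theta>)"
  shows "qbg_edge R I0 \<alpha> J (wfloor \<alpha> I0 J (refl \<theta> \<circ> w)) (z \<beta>) (wfloor \<alpha> I0 J (refl \<theta> \<circ> w \<circ> refl \<beta>))"
proof -
  define u where "u = wfloor \<alpha> I0 J (refl \<theta> \<circ> w)"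
  have wm: "w \<in> min_reps \<alpha> I0 J" using edge by (simp add: qbg_edge_def)
  then have b: "\<beta> \<in> pos_off_J" and step: "bruhat_step w \<beta> \<or> quantum_step w \<beta>"
    using edge qbg_edge_iff_step by blast+
  have wW: "w \<in> W" using wm by (simp add: min_reps_def)
  have um: "u \<in> min_reps \<alpha> I0 J"
    using wfloor_min_rep[OF weyl_sub_comp[OF refl_theta_weyl wW]] u_def by blast
  have uW: "u \<in> W" using um by (simp add: min_reps_def)
  have zb: "z \<beta> \<in> pos_off_J" using WJ_pos_off_J_iff[OF z pos_off_J_root[OF b]] b by blast
  have floor: "wfloor \<alpha> I0 J (refl \<theta> \<circ> w \<circ> refl \<beta>) = wfloor \<alpha> I0 J (u \<circ> refl (z \<beta>))"
    and len: "par_length (refl \<theta> \<circ> w \<circ> refl \<beta>) = par_length (u \<circ> refl (z \<beta>))"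
    using wfloor_comp_WJ_refl[OF uW z pos_off_J_root[OF b]] zdec u_def by simp_all
  have len_u: "par_length (refl \<theta> \<circ> w) = par_length u"
    using par_length_comp_WJ[OF z, of u] zdec u_def by simp
  have cz: "coroot_pair sum_pos_off_J (z \<beta>) = coroot_pair sum_pos_off_J \<beta>"
    using orthogonal_transformation_coroot_pair[OF weyl_orthogonal[OF weyl_J_weyl[OF z]]]
      WJ_fixes_sum_pos_off_J[OF z] by metis
  have "real (par_length (u \<circ> refl (z \<beta>))) - real (par_length u)
      = real (par_length (w \<circ> refl \<beta>)) - real (par_length w)
        - coroot_pair sum_pos_off_J \<beta> * coroot_pair (w \<beta>) \<theta>"
    using par_length_refl_theta_comp_refl[OF wW b sg] len len_u by simp
  with step step_coroot_pair_theta[OF wW b nt nm] cz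
  have "bruhat_step u (z \<beta>) \<or> quantum_step u (z \<beta>)"
    unfolding bruhat_step_def quantum_step_def by auto
  then show ?thesis using qbg_edge_iff_step[OF um] zb floor u_def by simp
qed

lemma edge_no_sign_change:
  assumes edge: "qbg_edge R I0 \<alpha> J w \<beta> (wfloor \<alpha> I0 J (w \<circ> refl \<beta>))"
    and nm: "w \<beta> \<noteq> - \<theta>" and p: "w \<Lambda> \<bullet> \<theta> \<le> 0" and q: "0 \<le> (w \<circ> refl \<beta>) \<Lambda> \<bullet> \<theta>"
  shows "(w \<circ> refl \<beta>) \<Lambda> \<bullet> \<theta> \<le> w \<Lambda> \<bullet> \<theta>"
proof (rule ccontr)
  assume gt: "\<not> ?thesis"
  have wm: "w \<in> min_reps \<alpha> I0 J" using edge by (simp add: qbg_edge_def)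
  then have b: "\<beta> \<in> pos_off_J" and step: "bruhat_step w \<beta> \<or> quantum_step w \<beta>"
    using edge qbg_edge_iff_step by blast+
  have wW: "w \<in> W" using wm by (simp add: min_reps_def)
  have wo: "orthogonal_transformation w" using weyl_orthogonal[OF wW] .
  have bnz: "\<beta> \<noteq> 0" using pos_off_J_nonzero[OF b] .
  obtain \<gamma> where g: "\<gamma> \<in> R" "w \<gamma> = \<theta>" using weyl_root_surj[OF wW theta_root] by blast
  have lam_w: "w \<Lambda> \<bullet> \<theta> = \<Lambda> \<bullet> \<gamma>" using orthogonal_transformation_inner[OF wo] g(2) by metis
  have "(w \<circ> refl \<beta>) \<Lambda> \<bullet> \<theta> = refl \<beta> \<Lambda> \<bullet> \<gamma>" using orthogonal_transformation_inner[OF wo] g(2)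
    by fastforce
  then have lam_wb: "(w \<circ> refl \<beta>) \<Lambda> \<bullet> \<theta> = \<Lambda> \<bullet> refl \<beta> \<gamma>" using refl_adjoint[OF bnz] by simp
  have "coroot_pair \<gamma> \<beta> * (\<Lambda> \<bullet> \<beta>) < 0"
    using inner_Lambda_refl[of \<beta> \<gamma>] gt lam_w lam_wb by simp
  then have "coroot_pair \<theta> (w \<beta>) < 0"
    using orthogonal_transformation_coroot_pair[OF wo, of \<gamma> \<beta>] g(2) pos_off_J_inner_Lambda[OF b]
    by (simp add: mult_less_0_iff)
  then have s: "w \<beta> \<bullet> \<theta> < 0"
    using coroot_pair_sign[OF root_nonzero[OF weyl_root[OF wW pos_off_J_root[OF b]]]]
    by (simp add: inner_commute)
  then have "\<not> bruhat_step w \<beta>"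
    using bruhat_step_pos[OF wW b] theta_neg_root[OF weyl_root[OF wW pos_off_J_root[OF b]]] by blast
  then have "quantum_step w \<beta>" using step by blast
  then have "\<Lambda> \<bullet> refl \<beta> \<gamma> < 0" using quantum_step_refl_sign[OF wW b _ g s nm] p lam_w by simp
  then show False using q lam_wb by simp
qed

end

theorem lemma4p5:
  fixes R :: "'a::euclidean_space set" and I0 J :: "'i set" and \<alpha> :: "'i \<Rightarrow> 'a"
    and \<theta> \<Lambda> \<beta> :: 'a and m :: "'i \<Rightarrow> nat" and w z :: "'a \<Rightarrow> 'a"
  assumes rs: "root_system R" and irr: "irreducible_rs R"
    and simple: "simple_system R I0 \<alpha>" and hr: "highest_root R I0 \<alpha> \<theta>"
    and lam: "\<forall>i\<in>I0. coroot_pair \<Lambda> (\<alpha> i) = real (m i)"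
    and J_def: "J = {j\<in>I0. coroot_pair \<Lambda> (\<alpha> j) = 0}"
    and edge: "qbg_edge R I0 \<alpha> J w \<beta> (wfloor \<alpha> I0 J (w \<circ> refl \<beta>))"
    and z: "z \<in> weyl_sub \<alpha> J"
    and zdec: "refl \<theta> \<circ> w = wfloor \<alpha> I0 J (refl \<theta> \<circ> w) \<circ> z"
  shows
    "(alpha0_pair \<theta> (w \<Lambda>) > 0 \<and> w \<beta> \<noteq> \<theta> \<and> w \<beta> \<noteq> - \<theta> \<longrightarrow>
        alpha0_pair \<theta> ((w \<circ> refl \<beta>) \<Lambda>) > 0
        \<and> qbg_edge R I0 \<alpha> J (wfloor \<alpha> I0 J (refl \<theta> \<circ> w)) (z \<beta>)
            (wfloor \<alpha> I0 J (refl \<theta> \<circ> w \<circ> refl \<beta>)))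
   \<and> (alpha0_pair \<theta> ((w \<circ> refl \<beta>) \<Lambda>) < 0 \<and> w \<beta> \<noteq> \<theta> \<and> w \<beta> \<noteq> - \<theta> \<longrightarrow>
        alpha0_pair \<theta> (w \<Lambda>) < 0
        \<and> qbg_edge R I0 \<alpha> J (wfloor \<alpha> I0 J (refl \<theta> \<circ> w)) (z \<beta>)
            (wfloor \<alpha> I0 J (refl \<theta> \<circ> w \<circ> refl \<beta>)))
   \<and> (alpha0_pair \<theta> ((w \<circ> refl \<beta>) \<Lambda>) < 0 \<and> alpha0_pair \<theta> (w \<Lambda>) \<ge> 0 \<longrightarrow>
        w \<beta> = \<theta> \<or> w \<beta> = - \<theta>)
   \<and> (alpha0_pair \<theta> ((w \<circ> refl \<beta>) \<Lambda>) \<le> 0 \<and> alpha0_pair \<theta> (w \<Lambda>) > 0 \<longrightarrow>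
        w \<beta> = \<theta> \<or> w \<beta> = - \<theta>)"
proof -
  interpret highest_root_system R I0 \<alpha> \<Lambda> m J \<theta>
    using rs simple lam J_def hr by unfold_locales auto
  let ?a = "w \<Lambda> \<bullet> \<theta>" and ?b = "(w \<circ> refl \<beta>) \<Lambda> \<bullet> \<theta>"
  have no_change: "?a \<le> 0 \<Longrightarrow> 0 \<le> ?b \<Longrightarrow> w \<beta> \<noteq> - \<theta> \<Longrightarrow> ?b \<le> ?a"
    using edge_no_sign_change[OF edge] by blast
  have translate: "w \<beta> \<noteq> \<theta> \<Longrightarrow> w \<beta> \<noteq> - \<theta> \<Longrightarrow> (?a < 0 \<and> ?b < 0) \<or> (0 < ?a \<and> 0 < ?b) \<Longrightarrow>
      qbg_edge R I0 \<alpha> J (wfloor \<alpha> I0 J (refl \<theta> \<circ> w)) (z \<beta>) (wfloor \<alpha> I0 J (refl \<theta> \<circ> w \<circ> refl \<beta>))"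
    using edge_refl_theta[OF edge z zdec] by blast
  show ?thesis
    unfolding alpha0_pair_pos_iff alpha0_pair_neg_iff alpha0_pair_nonpos_iff alpha0_pair_nonneg_iff
    using no_change translate by (intro conjI impI; force)
qed

end
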